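(* Let $\tau\in\mathbb{R}$ and $R\in\mathcal{R}_O\cap(\mathcal{L}_I\cup\mathcal{L}_{II}\cup\mathcal{L}_{III})$. Then: (A) if $\tau=0$, $\widetilde\beta_R(\tau)=0$; (B) if $\tau<0$: (b1) if $R$ has no critical points in $\mathbb{T}$, then $\widetilde\beta_R(\tau)=0$; (b2) if $R$ has at least one critical point in $\mathbb{T}$, then $\widetilde\beta_R(\tau)=0$ for $\tau\in(-1,0)$ and $\widetilde\beta_R(\tau)=|\tau|-1$ for $\tau\le-1$; (C) if $\tau>0$: (c1) if $R\in\mathcal{R}_O\cap\mathcal{L}_I$, then $\widetilde\beta_R(\tau)=0$; (c2) if $R\in\mathcal{R}_O\cap\mathcal{L}_{II}$, then $\widetilde\beta_R(\tau)=2\tau-1$ for $\tau>1/2$ and $\widetilde\beta_R(\tau)=0$ for $\tau\in(0,1/2]$; (c3) if $R\in\mathcal{R}_O\cap\mathcal{L}_{III}$, then $\widetilde\beta_R(\tau)=3\tau-1$ for $\tau>1/3$ and $\widetilde\beta_R(\tau)=0$ for $\tau\in(0,1/3]$.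
   Context: $\Delta$ is the unit disk, $\mathbb{T}=\partial\Delta$, $\overline{\Delta}=\Delta\cup\mathbb{T}$. $P_k$ denotes a polynomial of degree at most $k$. $\mathcal{R}$ is the class of rational functions $R$ with no poles in $\Delta$ and $R(0)=0,R'(0)=1$. A critical point of $R$ in $\mathbb{T}$ is a point of $\mathbb{T}$ where the rational function $R'$ vanishes. $\mathcal{L}_I$: those $R\in\mathcal{R}$ of the form $R=P_n/P_m$ with $P_n,P_m$ coprime and $P_m$ without zeros in $\overline{\Delta}$. $\mathcal{L}_{II}$: those $R\in\mathcal{R}$ of the form $R(z)=\frac{P_n(z)}{\prod_{j=1}^l(z-e^{i\theta_j})P_m(z)}$ with $l\ge1$, the $e^{i\theta_j}$ distinct, $P_m$ without zeros in $\overline{\Delta}$, numerator and denominator coprime. $\mathcal{L}_{III}$: those $R\in\mathcal{R}$ of the form $R(z)=\frac{P_n(z)}{\prod_{j=1}^l(z-e^{i\theta_j})^2\prod_{k=1}^t(z-e^{i\tilde\theta_k})P_m(z)}$ with $l\ge1$, $t\ge0$, the points $e^{i\theta_j},e^{i\tilde\theta_k}$ all distinct, $P_m$ without zeros in $\overline{\Delta}$, numerator and denominator coprime. $\mathcal{R}_O$: those $R\in\mathcal{R}$ such that $R'(z)=\frac{(z-z_1)\cdots(z-z_s)P_{\mathbf n}(z)}{P_{\mathbf m}(z)}$ with $s\ge0$, $z_1,\dots,z_s$ the distinct critical points of $R$ in $\mathbb{T}$, numerator and denominator coprime, $P_{\mathbf n}$ without zeros in $\mathbb{T}$ and $P_{\mathbf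 m}$ without zeros in $\Delta$ (i.e. every zero of $R'$ on $\mathbb{T}$ is simple). For $R\in\mathcal{R}$ choose $r_R\in(0,1)$ with $R'\ne0$ on $r_R<|z|<1$; for real $\tau$ the generalized integral means spectrum is $\widetilde\beta_R(\tau)=\limsup_{r\to1^-}\frac{\log\int_{-\pi}^{\pi}|R'(re^{i\theta})|^\tau d\theta}{|\log(1-r)|}$. *)

theory Defs
  imports "HOL-Analysis.Analysis" "HOL-Computational_Algebra.Computational_Algebra"
begin

text \<open>A rational function R is represented by a pair of complex polynomials (p, q)
  in lowest terms (coprime p q, q nonzero); R z = p z / q z.\<close>

definition ratfun :: "complex poly \<Rightarrow> complex poly \<Rightarrow> complex \<Rightarrow> complex" where
  "ratfun p q = (\<lambda>z. poly p z / poly q z)"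

definition classR :: "complex poly \<Rightarrow> complex poly \<Rightarrow> bool" where
  "classR p q \<longleftrightarrow> q \<noteq> 0 \<and> coprime p q \<and>
     (\<forall>z. cmod z < 1 \<longrightarrow> poly q z \<noteq> 0) \<and>
     ratfun p q 0 = 0 \<and> (ratfun p q has_field_derivative 1) (at 0)"

definition classL1 :: "complex poly \<Rightarrow> complex poly \<Rightarrow> bool" where
  "classL1 p q \<longleftrightarrow> classR p q \<and> (\<forall>z. cmod z \<le> 1 \<longrightarrow> poly q z \<noteq> 0)"

definition classL2 :: "complex poly \<Rightarrow> complex poly \<Rightarrow> bool" where
  "classL2 p q \<longleftrightarrow> classR p q \<and>
     (\<exists>S m. finite S \<and> S \<noteq> {} \<and> (\<forall>a\<in>S. cmod a = 1) \<and>
        (\<forall>z. cmod z \<le> 1 \<longrightarrow> poly m z \<noteq> 0) \<and>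
        q = (\<Prod>a\<in>S. [:-a, 1:]) * m)"

definition classL3 :: "complex poly \<Rightarrow> complex poly \<Rightarrow> bool" where
  "classL3 p q \<longleftrightarrow> classR p q \<and>
     (\<exists>S T m. finite S \<and> S \<noteq> {} \<and> finite T \<and> S \<inter> T = {} \<and>
        (\<forall>a\<in>S. cmod a = 1) \<and> (\<forall>b\<in>T. cmod b = 1) \<and>
        (\<forall>z. cmod z \<le> 1 \<longrightarrow> poly m z \<noteq> 0) \<and>
        q = (\<Prod>a\<in>S. [:-a, 1:] ^ 2) * (\<Prod>b\<in>T. [:-b, 1:]) * m)"

definition crit_T :: "complex poly \<Rightarrow> complex poly \<Rightarrow> complex set" where
  "crit_T p q = {w. cmod w = 1 \<and> poly q w \<noteq> 0 \<and> deriv (ratfun p q) w = 0}"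

text \<open>The class R_O. As rational functions,
  R' = (p' q - p q') / q^2; the identity R' = (z-z_1)...(z-z_s) A / B is stated by cross-multiplication.\<close>
definition classRO :: "complex poly \<Rightarrow> complex poly \<Rightarrow> bool" where
  "classRO p q \<longleftrightarrow> classR p q \<and>
     (\<exists>Z A B. finite Z \<and> Z = crit_T p q \<and> B \<noteq> 0 \<and>
        coprime ((\<Prod>z\<in>Z. [:-z, 1:]) * A) B \<and>
        (\<forall>z. cmod z = 1 \<longrightarrow> poly A z \<noteq> 0) \<and>
        (\<forall>z. cmod z < 1 \<longrightarrow> poly B z \<noteq> 0) \<and>
        (\<Prod>z\<in>Z. [:-z, 1:]) * A * q ^ 2 = (pderiv p * q - p * pderiv q) * B)"

definition beta_tilde :: "complex poly \<Rightarrow> complex poly \<Rightarrow> real \<Rightarrow> ereal" where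
  "beta_tilde p q \<tau> = Limsup (at_left (1::real))
     (\<lambda>r. ereal (ln (integral {-pi..pi}
                (\<lambda>\<theta>. cmod (deriv (ratfun p q) (complex_of_real r * cis \<theta>)) powr \<tau>))
              / \<bar>ln (1 - r)\<bar>))"

end

theory Submission
  imports Defs
begin

(* Near the unit circle, |R'(z)| is uniformly comparable to the product of |z - w| ^ k(w) over the
   critical points w of R on the circle, where k(w) = 1 because these zeros of R' are simple, and
   over the poles w of R on the circle, where k(w) = -(m + 1) for a pole of order m: at each point
   of the circle the ratio has a positive limit, and compactness of the circle makes the bounds
   uniform. So the integral means of |R'| ^ tau are comparable to those of the weight
   prod_w |z - w| ^ (tau k(w)). In such a weight distinct points do not interact: a factor with
   exponent a < -1 contributes (1 - r) ^ (a + 1), and all other factors are integrable up to an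
   arbitrarily small power of 1 - r. Hence the spectrum is max (0, max_w (- tau k(w) - 1)), and it
   remains to read off k for the classes L_I, L_II and L_III. *)

section \<open>Growth exponents\<close>

definition has_growth_exponent :: "(real \<Rightarrow> real) \<Rightarrow> real \<Rightarrow> bool" where
  "has_growth_exponent f \<beta> \<longleftrightarrow>
     (\<exists>c>0. \<forall>\<^sub>F r in at_left 1. c * (1 - r) powr (- \<beta>) \<le> f r) \<and>
     (\<forall>e>0. \<exists>C. \<forall>\<^sub>F r in at_left 1. f r \<le> C * (1 - r) powr (- \<beta> - e))"

lemma ln_div_bounds_of_powr_bounds:
  fixes F c C h \<beta> e :: real
  assumes "0 < c" "0 < C" "0 < h" "h < 1"
    and "c * h powr (- \<beta>) \<le> F" "F \<le> C * h powr (- \<beta> - e)"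
  shows "\<beta> + ln c / (- ln h) \<le> ln F / (- ln h)"
    and "ln F / (- ln h) \<le> \<beta> + e + ln C / (- ln h)"
proof -
  define L where "L = - ln h"
  have L: "0 < L" "ln h = - L"
    using assms unfolding L_def by simp_all
  have "0 < c * h powr (- \<beta>)"
    using assms by simp
  then have "ln (c * h powr (- \<beta>)) \<le> ln F" "ln F \<le> ln (C * h powr (- \<beta> - e))"
    using assms(5,6) by (auto intro!: ln_mono)
  then have "ln c + \<beta> * L \<le> ln F" "ln F \<le> ln C + (\<beta> + e) * L"
    using assms by (simp_all add: ln_mult L algebra_simps)
  then have "(ln c + \<beta> * L) / L \<le> ln F / L" "ln F / L \<le> (ln C + (\<beta> + e) * L) / L"
    using L by (simp_all add: divide_right_mono)
  moreover have "(ln c + \<beta> * L) / L = \<beta> + ln c / L" "(ln C + (\<beta> + e) * L) / L = \<beta> + e + ln C / L"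
    using L by (simp_all add: field_simps)
  ultimately show "\<beta> + ln c / (- ln h) \<le> ln F / (- ln h)" "ln F / (- ln h) \<le> \<beta> + e + ln C / (- ln h)"
    unfolding L_def[symmetric] by simp_all
qed

lemma filterlim_abs_ln_one_minus_at_left_1:
  "filterlim (\<lambda>r::real. \<bar>ln (1 - r)\<bar>) at_top (at_left 1)"
proof -
  have "filterlim (\<lambda>r::real. 1 - r) (at_right 0) (at_left 1)"
    by (rule filterlim_at_withinI) (auto intro!: tendsto_eq_intros eventually_at_leftI[of 0])
  then have "filterlim (\<lambda>r::real. ln (1 - r)) at_bot (at_left 1)"
    by (rule filterlim_compose[OF ln_at_0])
  then have "filterlim (\<lambda>r::real. - ln (1 - r)) at_top (at_left 1)"
    by (simp add: filterlim_uminus_at_top)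
  moreover have "\<forall>\<^sub>F r in at_left 1. \<bar>ln (1 - r)\<bar> = - ln (1 - r :: real)"
    using eventually_at_left_real[of 0 "1::real"] by (auto elim!: eventually_mono)
  ultimately show ?thesis
    by (subst filterlim_cong[OF refl refl]) auto
qed

lemma has_growth_exponent_tendsto:
  assumes "has_growth_exponent f \<beta>"
  shows "((\<lambda>r. ln (f r) / \<bar>ln (1 - r)\<bar>) \<longlongrightarrow> \<beta>) (at_left 1)"
proof (rule tendstoI)
  fix \<eta> :: real
  assume \<eta>: "0 < \<eta>"
  obtain c where c: "0 < c" "\<forall>\<^sub>F r in at_left 1. c * (1 - r) powr (- \<beta>) \<le> f r"
    using assms unfolding has_growth_exponent_def by blast
  obtain C0 where C0: "\<forall>\<^sub>F r in at_left 1. f r \<le> C0 * (1 - r) powr (- \<beta> - \<eta> / 2)"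
    using assms \<eta> unfolding has_growth_exponent_def by (meson half_gt_zero)
  define C where "C = max C0 1"
  have C: "\<forall>\<^sub>F r in at_left 1. f r \<le> C * (1 - r) powr (- \<beta> - \<eta> / 2)"
    using C0 by eventually_elim (smt (verit) C_def mult_right_mono powr_ge_zero)
  have small: "\<forall>\<^sub>F r in at_left 1. \<bar>ln a / \<bar>ln (1 - r)\<bar>\<bar> < \<eta> / 2" for a
  proof -
    have "((\<lambda>r. ln a / \<bar>ln (1 - r)\<bar>) \<longlongrightarrow> 0) (at_left 1)"
      by (intro tendsto_divide_0[OF tendsto_const] filterlim_at_top_imp_at_infinity
          filterlim_abs_ln_one_minus_at_left_1)
    from tendstoD[OF this, of "\<eta> / 2"] \<eta> show ?thesis
      by simp
  qed
  have "\<forall>\<^sub>F r in at_left 1. r \<in> {0<..<1::real}"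
    by (rule eventually_at_left_real) simp
  then show "\<forall>\<^sub>F r in at_left 1. dist (ln (f r) / \<bar>ln (1 - r)\<bar>) \<beta> < \<eta>"
    using c(2) C small[of c] small[of C]
  proof eventually_elim
    case (elim r)
    define L where "L = - ln (1 - r)"
    have L: "\<bar>ln (1 - r)\<bar> = L"
      using elim unfolding L_def by simp
    have "0 < C"
      by (simp add: C_def)
    then have "\<beta> + ln c / L \<le> ln (f r) / L" "ln (f r) / L \<le> \<beta> + \<eta> / 2 + ln C / L"
      using ln_div_bounds_of_powr_bounds[of c C "1 - r" \<beta> "f r" "\<eta> / 2"] elim c(1)
      unfolding L_def by simp_all
    moreover have "- (\<eta> / 2) < ln c / L" "ln C / L < \<eta> / 2"
      using elim(4,5) unfolding L abs_less_iff by linarith+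
    ultimately show ?case
      using \<eta> unfolding dist_real_def L abs_less_iff by (intro conjI) linarith+
  qed
qed

lemma has_growth_exponent_Limsup:
  assumes "has_growth_exponent f \<beta>"
  shows "Limsup (at_left 1) (\<lambda>r. ereal (ln (f r) / \<bar>ln (1 - r)\<bar>)) = ereal \<beta>"
  using has_growth_exponent_tendsto[OF assms]
  by (intro lim_imp_Limsup) (auto simp: trivial_limit_at_left_real)

lemma has_growth_exponent_comparable:
  assumes g: "has_growth_exponent g \<beta>" and "0 < c"
    and comparable: "\<forall>\<^sub>F r in at_left 1. c * g r \<le> f r \<and> f r \<le> C * g r"
  shows "has_growth_exponent f \<beta>"
  unfolding has_growth_exponent_def
proof (intro conjI allI impI)
  obtain c0 where c0: "0 < c0" "\<forall>\<^sub>F r in at_left 1. c0 * (1 - r) powr (- \<beta>) \<le> g r"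
    using g unfolding has_growth_exponent_def by blast
  show "\<exists>c>0. \<forall>\<^sub>F r in at_left 1. c * (1 - r) powr (- \<beta>) \<le> f r"
  proof (intro exI conjI)
    show "0 < c * c0"
      using \<open>0 < c\<close> c0(1) by simp
    show "\<forall>\<^sub>F r in at_left 1. c * c0 * (1 - r) powr (- \<beta>) \<le> f r"
      using c0(2) comparable
      by eventually_elim (smt (verit) \<open>0 < c\<close> mult.assoc mult_left_mono)
  qed
  fix e :: real
  assume "0 < e"
  then obtain Cg where Cg: "\<forall>\<^sub>F r in at_left 1. g r \<le> Cg * (1 - r) powr (- \<beta> - e)"
    using g unfolding has_growth_exponent_def by blast
  have "\<forall>\<^sub>F r in at_left 1. f r \<le> (max C 0 * Cg) * (1 - r) powr (- \<beta> - e)"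
    using c0(2) Cg comparable
  proof eventually_elim
    case (elim r)
    then have "0 \<le> g r"
      using c0(1) by (smt (verit) mult_nonneg_nonneg powr_ge_zero)
    then have "f r \<le> max C 0 * g r"
      using elim by (smt (verit) mult_right_mono max.cobounded1)
    also have "\<dots> \<le> max C 0 * (Cg * (1 - r) powr (- \<beta> - e))"
      using elim by (intro mult_left_mono) auto
    finally show ?case
      by (simp add: mult.assoc)
  qed
  then show "\<exists>C. \<forall>\<^sub>F r in at_left 1. f r \<le> C * (1 - r) powr (- \<beta> - e)"
    by blast
qed

lemma norm_cis_diff: "cmod (cis a - cis b) = 2 * \<bar>sin ((a - b) / 2)\<bar>"
proof -
  have "(cmod (cis a - cis b))^2 = (cos a - cos b)^2 + (sin a - sin b)^2"
    by (simp add: cmod_def cis.code)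
  also have "\<dots> = 2 - 2 * cos (a - b)"
    by (simp add: cos_diff power2_eq_square algebra_simps)
  also have "cos (a - b) = 1 - 2 * sin ((a - b) / 2)^2"
    by (metis cos_double_sin times_divide_eq_right nonzero_mult_div_cancel_left zero_neq_numeral)
  finally have "(cmod (cis a - cis b))^2 = (2 * \<bar>sin ((a - b) / 2)\<bar>)^2"
    by (simp add: power_mult_distrib)
  then show ?thesis
    by (rule power2_eq_imp_eq) auto
qed

lemma norm_cis_diff_le: "cmod (cis a - cis b) \<le> \<bar>a - b\<bar>"
  using abs_sin_x_le_abs_x[of "(a - b) / 2"] by (simp add: norm_cis_diff)

lemma sin_ge_half_self:
  assumes "0 \<le> x" "x \<le> pi / 2"
  shows "x / 2 \<le> sin x"
proof -
  have "\<bar>sin x - (\<Sum>m<3. sin_coeff m * x ^ m)\<bar> \<le> inverse (fact 3) * \<bar>x\<bar> ^ 3"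
    by (rule Maclaurin_sin_bound)
  moreover have "(\<Sum>m<3. sin_coeff m * x ^ m) = x"
    by (simp add: sin_coeff_def numeral_3_eq_3 lessThan_Suc)
  ultimately have "\<bar>sin x - x\<bar> \<le> x ^ 3 / 6"
    using assms by (simp add: fact_numeral)
  then have "x - x ^ 3 / 6 \<le> sin x"
    by linarith
  moreover have "x^2 \<le> 3"
  proof -
    have "x \<le> 1.6" using assms pi_approx by simp
    then have "x^2 \<le> 1.6^2" using assms by (intro power_mono) auto
    then show ?thesis by (simp add: power2_eq_square)
  qed
  then have "x ^ 3 / 6 \<le> x / 2"
    using assms by (simp add: power3_eq_cube power2_eq_square mult_left_mono)
  ultimately show ?thesis by simp
qed

lemma norm_cis_diff_ge:
  assumes "\<bar>a - b\<bar> \<le> pi"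
  shows "\<bar>a - b\<bar> / 2 \<le> cmod (cis a - cis b)"
proof -
  have "\<bar>a - b\<bar> / 2 / 2 \<le> sin (\<bar>a - b\<bar> / 2)"
    using assms by (intro sin_ge_half_self) auto
  also have "sin (\<bar>a - b\<bar> / 2) = \<bar>sin ((a - b) / 2)\<bar>"
    using assms sin_ge_zero[of "\<bar>a - b\<bar> / 2"] sin_minus[of "(a - b) / 2"]
    by (cases "a \<le> b") (auto simp: abs_if minus_divide_left)
  finally show ?thesis by (simp add: norm_cis_diff)
qed

lemma norm_cis_minus_rcis:
  assumes "r \<le> 1"
  shows "cmod (cis t - complex_of_real r * cis t) = 1 - r"
proof -
  have "cis t - complex_of_real r * cis t = complex_of_real (1 - r) * cis t"
    by (simp add: algebra_simps)
  then show ?thesis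
    using assms by (simp only: norm_mult norm_cis norm_of_real) simp
qed

lemma norm_rcis_minus_unit_ge:
  assumes "0 \<le> r" "cmod w = 1"
  shows "1 - r \<le> cmod (complex_of_real r * cis t - w)"
  using norm_triangle_ineq2[of w "complex_of_real r * cis t"] assms
  by (simp add: norm_mult norm_minus_commute)

lemma norm_rcis_minus_unit_le:
  assumes "0 \<le> r" "r \<le> 1" "cmod w = 1"
  shows "cmod (complex_of_real r * cis t - w) \<le> 2"
  using norm_triangle_ineq4[of "complex_of_real r * cis t" w] assms
  by (simp add: norm_mult)

lemma continuous_on_norm_rcis_minus_powr:
  assumes "0 \<le> r" "r < 1" "cmod w = 1"
  shows "continuous_on S (\<lambda>t. cmod (complex_of_real r * cis t - w) powr a)"
proof -
  have "\<forall>t\<in>S. cmod (complex_of_real r * cis t - w) \<noteq> 0"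
    using norm_rcis_minus_unit_ge[OF assms(1,3)] assms(2) by (smt (verit))
  then show ?thesis by (intro continuous_intros) auto
qed

section \<open>Integrals of powers of distances to points of the unit circle\<close>

lemma kink_antiderivative:
  fixes h e c :: real
  assumes "0 < h" "0 < e" "x \<noteq> c"
  shows "((\<lambda>\<theta>. ((h + max (\<theta> - c) 0) powr e - (h + max (c - \<theta>) 0) powr e) / e)
           has_real_derivative (h + \<bar>x - c\<bar>) powr (e - 1)) (at x)"
proof (cases "x > c")
  case True
  have "((\<lambda>y. ((h + (y - c)) powr e - h powr e) / e) has_real_derivative
          (h + \<bar>x - c\<bar>) powr (e - 1)) (at x)"
    using True assms by (auto intro!: derivative_eq_intros)
  then show ?thesis
    by (rule has_field_derivative_transform_within_open[of _ _ _ "{c<..}"]) (use True in auto)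
next
  case False
  with assms have "x < c"
    by auto
  have "((\<lambda>y. (h powr e - (h + (c - y)) powr e) / e) has_real_derivative
          (h + \<bar>x - c\<bar>) powr (e - 1)) (at x)"
    using \<open>x < c\<close> assms by (auto intro!: derivative_eq_intros)
  then show ?thesis
    by (rule has_field_derivative_transform_within_open[of _ _ _ "{..<c}"]) (use \<open>x < c\<close> in auto)
qed

lemma kink_powr_integral:
  fixes h e c :: real
  assumes h: "0 < h" "h \<le> 1" and e: "0 < e"
  shows "(\<lambda>\<theta>. (h + \<bar>\<theta> - c\<bar>) powr (e - 1)) integrable_on {-pi..pi}"
    and "integral {-pi..pi} (\<lambda>\<theta>. (h + \<bar>\<theta> - c\<bar>) powr (e - 1))
           \<le> ((1 + \<bar>pi - c\<bar>) powr e + (1 + \<bar>pi + c\<bar>) powr e) / e"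
proof -
  define F where
    "F = (\<lambda>\<theta>::real. ((h + max (\<theta> - c) 0) powr e - (h + max (c - \<theta>) 0) powr e) / e)"
  have cont: "continuous_on {-pi..pi} F"
    unfolding F_def using h e by (intro continuous_intros) auto
  have der: "(F has_vector_derivative (h + \<bar>x - c\<bar>) powr (e - 1)) (at x)" if "x \<noteq> c" for x
    using kink_antiderivative[OF h(1) e that] unfolding F_def
    by (simp add: has_real_derivative_iff_has_vector_derivative)
  have integral: "((\<lambda>\<theta>. (h + \<bar>\<theta> - c\<bar>) powr (e - 1)) has_integral (F pi - F (-pi))) {-pi..pi}"
    by (rule fundamental_theorem_of_calculus_interior_strong[of "{c}"]) (use der cont in auto)
  then show "(\<lambda>\<theta>. (h + \<bar>\<theta> - c\<bar>) powr (e - 1)) integrable_on {-pi..pi}"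
    by blast
  have "(h + max (pi - c) 0) powr e \<le> (1 + \<bar>pi - c\<bar>) powr e"
    "(h + max (c + pi) 0) powr e \<le> (1 + \<bar>pi + c\<bar>) powr e"
    using h e by (auto intro!: powr_mono2)
  moreover have "0 \<le> (h + max (c - pi) 0) powr e" "0 \<le> (h + max (- pi - c) 0) powr e"
    by simp_all
  moreover have "e * (F pi - F (-pi)) = (h + max (pi - c) 0) powr e - (h + max (c - pi) 0) powr e
      - ((h + max (- pi - c) 0) powr e - (h + max (c + pi) 0) powr e)"
    using e unfolding F_def by (simp add: field_simps)
  ultimately have "e * (F pi - F (-pi)) \<le> (1 + \<bar>pi - c\<bar>) powr e + (1 + \<bar>pi + c\<bar>) powr e"
    by linarith
  then have "F pi - F (-pi) \<le> ((1 + \<bar>pi - c\<bar>) powr e + (1 + \<bar>pi + c\<bar>) powr e) / e"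
    using e by (simp add: field_simps)
  then show "integral {-pi..pi} (\<lambda>\<theta>. (h + \<bar>\<theta> - c\<bar>) powr (e - 1))
           \<le> ((1 + \<bar>pi - c\<bar>) powr e + (1 + \<bar>pi + c\<bar>) powr e) / e"
    using integral_unique[OF integral] by simp
qed

lemma kink_le_norm_rcis_minus:
  assumes "0 \<le> r" "r \<le> 1" "cis c = w" "\<bar>\<theta> - c\<bar> \<le> pi"
  shows "(1 - r) + \<bar>\<theta> - c\<bar> \<le> 5 * cmod (complex_of_real r * cis \<theta> - w)"
proof -
  let ?z = "complex_of_real r * cis \<theta>"
  have "\<bar>\<theta> - c\<bar> \<le> 2 * cmod (cis \<theta> - w)"
    using norm_cis_diff_ge[OF assms(4)] assms(3) by simp
  moreover have "cmod (cis \<theta> - w) \<le> cmod (cis \<theta> - ?z) + cmod (?z - w)"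
    by (rule norm_diff_triangle_le) auto
  moreover have "cmod (cis \<theta> - ?z) = 1 - r"
    using assms(2) by (rule norm_cis_minus_rcis)
  moreover have "1 - r \<le> cmod (?z - w)"
    using assms(1,3) by (intro norm_rcis_minus_unit_ge) auto
  ultimately show ?thesis by linarith
qed

lemma powr_le_kink_powr:
  fixes t h \<alpha> e \<gamma> :: real
  assumes "0 < h" "h \<le> 1" "h \<le> t" "t \<le> 1 + pi" "\<alpha> < 0" "0 < e" "\<gamma> \<le> 0" "\<gamma> \<le> \<alpha> + 1 - e"
  shows "t powr \<alpha> \<le> (1 + pi) * h powr \<gamma> * t powr (e - 1)"
proof -
  have "1 \<le> h powr \<gamma>"
    using powr_mono'[of \<gamma> 0 h] assms by simp
  have "t powr (\<alpha> - e + 1) \<le> (1 + pi) * h powr \<gamma>"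
  proof (cases "\<alpha> - e + 1 \<le> 0")
    case True
    have "t powr (\<alpha> - e + 1) \<le> h powr (\<alpha> - e + 1)"
      using powr_mono2'[OF True] assms by simp
    also have "\<dots> \<le> h powr \<gamma>"
      using powr_mono'[of \<gamma> "\<alpha> - e + 1" h] assms by simp
    also have "\<dots> \<le> (1 + pi) * h powr \<gamma>"
      using pi_gt_zero by (simp add: distrib_right)
    finally show ?thesis .
  next
    case False
    have "t powr (\<alpha> - e + 1) \<le> (1 + pi) powr (\<alpha> - e + 1)"
      using False assms by (intro powr_mono2) auto
    also have "\<dots> \<le> (1 + pi) powr 1"
      using assms pi_gt_zero by (intro powr_mono) auto
    also have "\<dots> \<le> (1 + pi) * h powr \<gamma>"
      using \<open>1 \<le> h powr \<gamma>\<close> pi_gt_zero mult_left_mono[of 1 "h powr \<gamma>" "1 + pi"] by simp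
    finally show ?thesis .
  qed
  moreover have "t powr \<alpha> = t powr (\<alpha> - e + 1) * t powr (e - 1)"
    by (simp add: powr_add[symmetric])
  ultimately show ?thesis
    using assms by (simp add: mult_right_mono)
qed

lemma norm_rcis_minus_powr_le_kink:
  fixes \<alpha> e \<gamma> :: real
  assumes r: "0 \<le> r" "r < 1" and c: "cis c = w" "\<bar>\<theta> - c\<bar> \<le> pi"
    and \<alpha>: "\<alpha> < 0" and e: "0 < e" and \<gamma>: "\<gamma> \<le> 0" "\<gamma> \<le> \<alpha> + 1 - e"
  shows "cmod (complex_of_real r * cis \<theta> - w) powr \<alpha>
    \<le> 5 powr (- \<alpha>) * (1 + pi) * (1 - r) powr \<gamma> * ((1 - r) + \<bar>\<theta> - c\<bar>) powr (e - 1)"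
proof -
  define h where "h = 1 - r"
  have h: "0 < h" "h \<le> 1"
    using r unfolding h_def by auto
  have "(h + \<bar>\<theta> - c\<bar>) / 5 \<le> cmod (complex_of_real r * cis \<theta> - w)"
    using kink_le_norm_rcis_minus[of r c w \<theta>] r c unfolding h_def by simp
  then have "cmod (complex_of_real r * cis \<theta> - w) powr \<alpha> \<le> ((h + \<bar>\<theta> - c\<bar>) / 5) powr \<alpha>"
    using h \<alpha> by (intro powr_mono2') auto
  also have "\<dots> = 5 powr (- \<alpha>) * (h + \<bar>\<theta> - c\<bar>) powr \<alpha>"
    using h by (simp add: powr_divide powr_minus_divide)
  also have "\<dots> \<le> 5 powr (- \<alpha>) * ((1 + pi) * h powr \<gamma> * (h + \<bar>\<theta> - c\<bar>) powr (e - 1))"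
    using h c \<alpha> e \<gamma> by (intro mult_left_mono powr_le_kink_powr) auto
  finally show ?thesis
    unfolding h_def by (simp add: mult.assoc)
qed

lemma cis_nearby_representative:
  assumes "\<theta> \<in> {-pi..pi}" "-pi < \<phi>" "\<phi> \<le> pi"
  obtains c where "c \<in> {\<phi> - 2 * pi, \<phi>, \<phi> + 2 * pi}" "cis c = cis \<phi>" "\<bar>\<theta> - c\<bar> \<le> pi"
proof -
  have cis: "cis (\<phi> - 2 * pi) = cis \<phi>" "cis (\<phi> + 2 * pi) = cis \<phi>"
    by (simp_all add: cis.code cos_diff sin_diff cos_add sin_add)
  consider "\<theta> - \<phi> < -pi" | "\<bar>\<theta> - \<phi>\<bar> \<le> pi" | "\<theta> - \<phi> > pi"
    by linarith
  then show ?thesis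
  proof cases
    case 1
    then show ?thesis
      using that[of "\<phi> - 2 * pi"] cis assms by auto
  next
    case 2
    then show ?thesis
      using that[of \<phi>] by auto
  next
    case 3
    then show ?thesis
      using that[of "\<phi> + 2 * pi"] cis assms by auto
  qed
qed

lemma integral_norm_rcis_minus_neg_powr_le:
  fixes w :: complex and \<alpha> e \<gamma> :: real
  assumes w: "cmod w = 1" and \<alpha>: "\<alpha> < 0" and e: "0 < e" and \<gamma>: "\<gamma> \<le> 0" "\<gamma> \<le> \<alpha> + 1 - e"
  shows "\<exists>C. \<forall>r. 0 \<le> r \<and> r < 1 \<longrightarrow>
           integral {-pi..pi} (\<lambda>\<theta>. cmod (complex_of_real r * cis \<theta> - w) powr \<alpha>) \<le> C * (1 - r) powr \<gamma>"
proof -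
  define \<phi> where "\<phi> = Arg w"
  have cis_\<phi>: "cis \<phi> = w"
    using w cis_Arg[of w] unfolding \<phi>_def by (force simp: sgn_div_norm)
  have \<phi>: "-pi < \<phi>" "\<phi> \<le> pi"
    using Arg_bounded unfolding \<phi>_def by auto
  define Q where "Q = (\<lambda>c::real. ((1 + \<bar>pi - c\<bar>) powr e + (1 + \<bar>pi + c\<bar>) powr e) / e)"
  define K where "K = 5 powr (- \<alpha>) * (1 + pi)"
  show ?thesis
  proof (intro exI[of _ "K * (Q (\<phi> - 2 * pi) + Q \<phi> + Q (\<phi> + 2 * pi))"] allI impI)
    fix r :: real
    assume r: "0 \<le> r \<and> r < 1"
    define g where "g = (\<lambda>c \<theta>. ((1 - r) + \<bar>\<theta> - c\<bar>) powr (e - 1))"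
    define G where "G = (\<lambda>\<theta>. g (\<phi> - 2 * pi) \<theta> + g \<phi> \<theta> + g (\<phi> + 2 * pi) \<theta>)"
    have g_integrable: "g c integrable_on {-pi..pi}" and g_integral: "integral {-pi..pi} (g c) \<le> Q c" for c
      unfolding g_def Q_def using kink_powr_integral[of "1 - r" e c] r e by auto
    have "cmod (complex_of_real r * cis \<theta> - w) powr \<alpha> \<le> K * (1 - r) powr \<gamma> * G \<theta>"
      if \<theta>: "\<theta> \<in> {-pi..pi}" for \<theta>
    proof -
      obtain c where c: "c \<in> {\<phi> - 2 * pi, \<phi>, \<phi> + 2 * pi}" "cis c = cis \<phi>" "\<bar>\<theta> - c\<bar> \<le> pi"
        using cis_nearby_representative[OF \<theta> \<phi>] by blast
      have "cmod (complex_of_real r * cis \<theta> - w) powr \<alpha> \<le> K * (1 - r) powr \<gamma> * g c \<theta>"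
        using norm_rcis_minus_powr_le_kink[of r c w \<theta> \<alpha> e \<gamma>] r c cis_\<phi> \<alpha> e \<gamma>
        unfolding K_def g_def by simp
      also have "g c \<theta> \<le> G \<theta>"
        using c(1) unfolding G_def g_def by auto
      then have "K * (1 - r) powr \<gamma> * g c \<theta> \<le> K * (1 - r) powr \<gamma> * G \<theta>"
        unfolding K_def using pi_gt_zero by (intro mult_left_mono) auto
      finally show ?thesis .
    qed
    then have "integral {-pi..pi} (\<lambda>\<theta>. cmod (complex_of_real r * cis \<theta> - w) powr \<alpha>)
        \<le> integral {-pi..pi} (\<lambda>\<theta>. K * (1 - r) powr \<gamma> * G \<theta>)"
      using r w unfolding G_def
      by (intro integral_le integrable_continuous_interval continuous_on_norm_rcis_minus_powr
          integrable_on_mult_right integrable_add g_integrable) auto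
    also have "\<dots> = K * (1 - r) powr \<gamma> *
        (integral {-pi..pi} (g (\<phi> - 2 * pi)) + integral {-pi..pi} (g \<phi>) + integral {-pi..pi} (g (\<phi> + 2 * pi)))"
      unfolding G_def by (simp add: integral_add g_integrable integrable_add)
    also have "\<dots> \<le> K * (1 - r) powr \<gamma> * (Q (\<phi> - 2 * pi) + Q \<phi> + Q (\<phi> + 2 * pi))"
      using pi_gt_zero unfolding K_def by (intro mult_left_mono add_mono g_integral) auto
    finally show "integral {-pi..pi} (\<lambda>\<theta>. cmod (complex_of_real r * cis \<theta> - w) powr \<alpha>)
        \<le> K * (Q (\<phi> - 2 * pi) + Q \<phi> + Q (\<phi> + 2 * pi)) * (1 - r) powr \<gamma>"
      by (simp add: algebra_simps)
  qed
qed

lemma integral_norm_rcis_minus_powr_le: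
  fixes w :: complex and \<alpha> e \<gamma> :: real
  assumes w: "cmod w = 1" and e: "0 < e" and \<gamma>: "\<gamma> \<le> 0" "\<gamma> \<le> \<alpha> + 1 - e"
  shows "\<exists>C. \<forall>r. 0 \<le> r \<and> r < 1 \<longrightarrow>
           integral {-pi..pi} (\<lambda>\<theta>. cmod (complex_of_real r * cis \<theta> - w) powr \<alpha>) \<le> C * (1 - r) powr \<gamma>"
proof (cases "\<alpha> < 0")
  case True
  then show ?thesis
    using integral_norm_rcis_minus_neg_powr_le[OF w _ e \<gamma>] by blast
next
  case False
  show ?thesis
  proof (intro exI[of _ "2 * pi * 2 powr \<alpha>"] allI impI)
    fix r :: real
    assume r: "0 \<le> r \<and> r < 1"
    have "integral {-pi..pi} (\<lambda>\<theta>. cmod (complex_of_real r * cis \<theta> - w) powr \<alpha>)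
        \<le> integral {-pi..pi} (\<lambda>\<theta>. 2 powr \<alpha>)"
    proof (rule integral_le)
      show "(\<lambda>\<theta>. cmod (complex_of_real r * cis \<theta> - w) powr \<alpha>) integrable_on {-pi..pi}"
        using r w by (intro integrable_continuous_interval continuous_on_norm_rcis_minus_powr) auto
      show "cmod (complex_of_real r * cis \<theta> - w) powr \<alpha> \<le> 2 powr \<alpha>" for \<theta>
        using False r w norm_rcis_minus_unit_le[of r w \<theta>] by (intro powr_mono2) auto
    qed auto
    also have "\<dots> \<le> 2 * pi * 2 powr \<alpha> * (1 - r) powr \<gamma>"
      using powr_mono'[of \<gamma> 0 "1 - r"] \<gamma> r by simp
    finally show "integral {-pi..pi} (\<lambda>\<theta>. cmod (complex_of_real r * cis \<theta> - w) powr \<alpha>)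
        \<le> 2 * pi * 2 powr \<alpha> * (1 - r) powr \<gamma>" .
  qed
qed

lemma finite_positive_lower_bound:
  assumes "finite A" "\<forall>x\<in>A. 0 < f x"
  obtains d :: real where "0 < d" "d \<le> 1" "\<forall>x\<in>A. d \<le> f x"
proof
  show "0 < Min (insert 1 (f ` A))" "Min (insert 1 (f ` A)) \<le> 1"
    "\<forall>x\<in>A. Min (insert 1 (f ` A)) \<le> f x"
    using assms by auto
qed

lemma powr_between:
  fixes x lo hi a :: real
  assumes "0 < lo" "lo \<le> x" "x \<le> hi"
  shows "min (lo powr a) (hi powr a) \<le> x powr a" "x powr a \<le> max (lo powr a) (hi powr a)"
proof -
  have "(lo powr a \<le> x powr a \<and> x powr a \<le> hi powr a) \<or> (hi powr a \<le> x powr a \<and> x powr a \<le> lo powr a)"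
  proof (cases "0 \<le> a")
    case True
    then show ?thesis using assms by (auto intro!: powr_mono2)
  next
    case False
    then show ?thesis using assms powr_mono2'[of a lo x] powr_mono2'[of a x hi] by auto
  qed
  then show "min (lo powr a) (hi powr a) \<le> x powr a" "x powr a \<le> max (lo powr a) (hi powr a)"
    by auto
qed

lemma integral_ge_on_subinterval:
  fixes f :: "real \<Rightarrow> real"
  assumes "continuous_on {s..t} f" "\<forall>x\<in>{s..t}. 0 \<le> f x"
    and "s \<le> a" "a \<le> b" "b \<le> t" "\<forall>x\<in>{a..b}. v \<le> f x"
  shows "v * (b - a) \<le> integral {s..t} f"
proof -
  have sub: "{a..b} \<subseteq> {s..t}"
    using assms by auto
  have f_ab: "f integrable_on {a..b}"
    by (rule integrable_continuous_interval, rule continuous_on_subset[OF assms(1) sub])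
  have "v * (b - a) = integral {a..b} (\<lambda>x. v)"
    using assms by simp
  also have "\<dots> \<le> integral {a..b} f"
    by (rule integral_le) (use f_ab assms in auto)
  also have "\<dots> \<le> integral {s..t} f"
    using integrable_continuous_interval[OF assms(1)] assms(2)
    by (intro integral_subset_le[OF sub f_ab]) auto
  finally show ?thesis .
qed

lemma integral_comparable_if_pointwise:
  fixes f g :: "real \<Rightarrow> real"
  assumes "f integrable_on S" "g integrable_on S" "\<And>x. x \<in> S \<Longrightarrow> c * g x \<le> f x \<and> f x \<le> C * g x"
  shows "c * integral S g \<le> integral S f \<and> integral S f \<le> C * integral S g"
  using integral_le[of "\<lambda>x. c * g x" S f] integral_le[of f S "\<lambda>x. C * g x"] assms
  by (auto simp: integrable_on_mult_right)

definition dist_weight :: "complex set \<Rightarrow> (complex \<Rightarrow> real) \<Rightarrow> real \<Rightarrow> real \<Rightarrow> real" where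
  "dist_weight W \<alpha> r \<theta> = (\<Prod>w\<in>W. cmod (complex_of_real r * cis \<theta> - w) powr \<alpha> w)"

lemma dist_weight_nonneg: "0 \<le> dist_weight W \<alpha> r \<theta>"
  unfolding dist_weight_def by (intro prod_nonneg) auto

lemma dist_weight_remove:
  assumes "finite W" "w \<in> W"
  shows "dist_weight W \<alpha> r \<theta> =
    cmod (complex_of_real r * cis \<theta> - w) powr \<alpha> w * dist_weight (W - {w}) \<alpha> r \<theta>"
  unfolding dist_weight_def using prod.remove[OF assms] by simp

lemma continuous_on_dist_weight:
  assumes "0 \<le> r" "r < 1" "\<forall>w\<in>W. cmod w = 1"
  shows "continuous_on S (dist_weight W \<alpha> r)"
  unfolding dist_weight_def
  by (intro continuous_on_prod ballI continuous_on_norm_rcis_minus_powr) (use assms in auto)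

lemma integrable_dist_weight:
  assumes "0 \<le> r" "r < 1" "\<forall>w\<in>W. cmod w = 1"
  shows "dist_weight W \<alpha> r integrable_on {-pi..pi}"
  by (rule integrable_continuous_interval, rule continuous_on_dist_weight) (use assms in auto)

lemma dist_weight_ge_if_far:
  assumes "\<forall>w\<in>W. cmod w = 1" "0 \<le> r" "r < 1" "0 < d"
    and "\<forall>w\<in>W. d \<le> cmod (complex_of_real r * cis \<theta> - w)"
  shows "(\<Prod>w\<in>W. min (d powr \<alpha> w) (2 powr \<alpha> w)) \<le> dist_weight W \<alpha> r \<theta>"
  unfolding dist_weight_def
  using assms norm_rcis_minus_unit_le[of r _ \<theta>]
  by (intro prod_mono conjI powr_between(1)) auto

lemma finite_set_separated:
  fixes W :: "'a::metric_space set"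
  assumes "finite W"
  obtains \<delta> where "0 < \<delta>" "\<And>w w'. w \<in> W \<Longrightarrow> w' \<in> W \<Longrightarrow> w \<noteq> w' \<Longrightarrow> 2 * \<delta> \<le> dist w w'"
proof -
  have "finite {(w, w'). w \<in> W \<and> w' \<in> W \<and> w \<noteq> w'}"
    by (rule finite_subset[of _ "W \<times> W"]) (use assms in auto)
  then obtain \<delta> where "0 < \<delta>"
    "\<forall>x\<in>{(w, w'). w \<in> W \<and> w' \<in> W \<and> w \<noteq> w'}. \<delta> \<le> (\<lambda>(w, w'). dist w w' / 2) x"
    by (rule finite_positive_lower_bound[where f = "\<lambda>(w, w'). dist w w' / 2"]) auto
  then show ?thesis
    using that by (auto simp: mult.commute)
qed

text \<open>Since the points of \<open>W\<close> are \<open>2 \<delta>\<close>-separated, at most one of them is closer than \<open>\<delta>\<close>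
  to \<open>z\<close>; all other factors of the weight are then bounded.\<close>

lemma dist_weight_le_sum:
  fixes \<alpha> :: "complex \<Rightarrow> real"
  assumes W: "finite W" "\<forall>w\<in>W. cmod w = 1" and r: "0 \<le> r" "r < 1"
    and \<delta>: "0 < \<delta>" "\<And>w w'. w \<in> W \<Longrightarrow> w' \<in> W \<Longrightarrow> w \<noteq> w' \<Longrightarrow> 2 * \<delta> \<le> cmod (w - w')"
  defines "B \<equiv> \<lambda>w. max 1 (max (\<delta> powr \<alpha> w) (2 powr \<alpha> w))"
  shows "dist_weight W \<alpha> r \<theta> \<le>
    (\<Prod>w\<in>W. B w) * (1 + (\<Sum>w\<in>W. cmod (complex_of_real r * cis \<theta> - w) powr \<alpha> w))"
proof -
  define z where "z = complex_of_real r * cis \<theta>"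
  define f where "f = (\<lambda>w. cmod (z - w) powr \<alpha> w)"
  have weight: "dist_weight W' \<alpha> r \<theta> = (\<Prod>w\<in>W'. f w)" for W'
    unfolding dist_weight_def f_def z_def ..
  have B: "1 \<le> B w" for w
    unfolding B_def by simp
  have K: "1 \<le> (\<Prod>w\<in>W. B w)"
    using B by (intro prod_ge_1) auto
  have sum: "0 \<le> (\<Sum>w\<in>W. f w)"
    unfolding f_def by (intro sum_nonneg) auto
  have far: "f w \<le> B w" if "w \<in> W" "\<delta> \<le> cmod (z - w)" for w
  proof -
    have "cmod (z - w) \<le> 2"
      unfolding z_def using r W that by (intro norm_rcis_minus_unit_le) auto
    then have "f w \<le> max (\<delta> powr \<alpha> w) (2 powr \<alpha> w)"
      unfolding f_def using that \<delta> by (intro powr_between(2)) auto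
    then show ?thesis
      unfolding B_def by simp
  qed
  show ?thesis
  proof (cases "\<forall>w\<in>W. \<delta> \<le> cmod (z - w)")
    case True
    then have "dist_weight W \<alpha> r \<theta> \<le> (\<Prod>w\<in>W. B w)"
      unfolding weight using far by (intro prod_mono) (auto simp: f_def)
    also have "\<dots> \<le> (\<Prod>w\<in>W. B w) * (1 + (\<Sum>w\<in>W. f w))"
      using K sum by (simp add: mult_le_cancel_left1)
    finally show ?thesis
      unfolding f_def z_def .
  next
    case False
    then obtain w0 where w0: "w0 \<in> W" "cmod (z - w0) < \<delta>"
      by auto
    have "\<delta> \<le> cmod (z - w)" if "w \<in> W - {w0}" for w
      using \<delta>(2)[of w w0] that w0 norm_triangle_ineq4[of "z - w0" "z - w"]
      by (simp add: norm_minus_commute)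
    then have "dist_weight (W - {w0}) \<alpha> r \<theta> \<le> (\<Prod>w\<in>W - {w0}. B w)"
      unfolding weight using far by (intro prod_mono) (auto simp: f_def)
    also have "\<dots> \<le> (\<Prod>w\<in>W. B w)"
      unfolding prod.remove[OF W(1) w0(1)] using B[of w0] prod_ge_1[of "W - {w0}" B] B
      by (simp add: mult_le_cancel_right1)
    finally have "dist_weight W \<alpha> r \<theta> \<le> f w0 * (\<Prod>w\<in>W. B w)"
      unfolding dist_weight_remove[OF W(1) w0(1)] f_def z_def
      by (intro mult_left_mono) auto
    also have "\<dots> \<le> (\<Prod>w\<in>W. B w) * (1 + (\<Sum>w\<in>W. f w))"
      using member_le_sum[of w0 W f] W w0 K by (auto simp: f_def mult.commute)
    finally show ?thesis
      unfolding f_def z_def .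
  qed
qed

lemma integral_dist_weight_le:
  assumes W: "finite W" "\<forall>w\<in>W. cmod w = 1" and e: "0 < e"
    and \<beta>: "0 \<le> \<beta>" "\<forall>w\<in>W. - \<alpha> w - 1 \<le> \<beta>"
  shows "\<exists>C. \<forall>r. 0 \<le> r \<and> r < 1 \<longrightarrow>
           integral {-pi..pi} (dist_weight W \<alpha> r) \<le> C * (1 - r) powr (- \<beta> - e)"
proof -
  define f where "f = (\<lambda>w r \<theta>. cmod (complex_of_real r * cis \<theta> - w) powr \<alpha> w)"
  have f_integrable: "f w r integrable_on {-pi..pi}" if "w \<in> W" "0 \<le> r" "r < 1" for w r
    unfolding f_def using that W
    by (intro integrable_continuous_interval continuous_on_norm_rcis_minus_powr) auto
  obtain \<delta> where \<delta>: "0 < \<delta>" "\<And>w w'. w \<in> W \<Longrightarrow> w' \<in> W \<Longrightarrow> w \<noteq> w' \<Longrightarrow> 2 * \<delta> \<le> cmod (w - w')"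
    using finite_set_separated[OF W(1)] unfolding dist_norm by blast
  define K where "K = (\<Prod>w\<in>W. max 1 (max (\<delta> powr \<alpha> w) (2 powr \<alpha> w)))"
  have K: "1 \<le> K"
    unfolding K_def by (intro prod_ge_1) auto
  have weight_le: "dist_weight W \<alpha> r \<theta> \<le> K * (1 + (\<Sum>w\<in>W. f w r \<theta>))" if "0 \<le> r" "r < 1" for r \<theta>
    unfolding K_def f_def using dist_weight_le_sum[OF W that \<delta>] .
  have "\<forall>w\<in>W. \<exists>C. \<forall>r. 0 \<le> r \<and> r < 1 \<longrightarrow> integral {-pi..pi} (f w r) \<le> C * (1 - r) powr (- \<beta> - e)"
    unfolding f_def using W e \<beta> by (intro ballI integral_norm_rcis_minus_powr_le) auto
  then obtain Cw where Cw: "\<And>w r. w \<in> W \<Longrightarrow> 0 \<le> r \<Longrightarrow> r < 1 \<Longrightarrow>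
      integral {-pi..pi} (f w r) \<le> Cw w * (1 - r) powr (- \<beta> - e)"
    by metis
  show ?thesis
  proof (intro exI[of _ "K * (2 * pi + (\<Sum>w\<in>W. Cw w))"] allI impI)
    fix r :: real
    assume r: "0 \<le> r \<and> r < 1"
    have sum_integrable: "(\<lambda>\<theta>. \<Sum>w\<in>W. f w r \<theta>) integrable_on {-pi..pi}"
      using r f_integrable by (intro integrable_sum W(1)) auto
    have "integral {-pi..pi} (dist_weight W \<alpha> r) \<le> integral {-pi..pi} (\<lambda>\<theta>. K * (1 + (\<Sum>w\<in>W. f w r \<theta>)))"
      using r W sum_integrable weight_le
      by (intro integral_le integrable_dist_weight integrable_on_mult_right integrable_add) auto
    also have "\<dots> = K * (2 * pi + (\<Sum>w\<in>W. integral {-pi..pi} (f w r)))"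
    proof -
      have "integral {-pi..pi} (\<lambda>\<theta>. 1 + (\<Sum>w\<in>W. f w r \<theta>))
          = integral {-pi..pi} (\<lambda>\<theta>. 1) + integral {-pi..pi} (\<lambda>\<theta>. \<Sum>w\<in>W. f w r \<theta>)"
        by (rule integral_add) (use sum_integrable in auto)
      also have "integral {-pi..pi} (\<lambda>\<theta>. \<Sum>w\<in>W. f w r \<theta>) = (\<Sum>w\<in>W. integral {-pi..pi} (f w r))"
        by (rule integral_sum[OF W(1)]) (use r f_integrable in auto)
      finally show ?thesis
        by simp
    qed
    also have "\<dots> \<le> K * (2 * pi * (1 - r) powr (- \<beta> - e) + (\<Sum>w\<in>W. Cw w * (1 - r) powr (- \<beta> - e)))"
    proof -
      have "1 \<le> (1 - r) powr (- \<beta> - e)"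
        using powr_mono'[of "- \<beta> - e" 0 "1 - r"] \<beta> e r by simp
      then have "2 * pi \<le> 2 * pi * (1 - r) powr (- \<beta> - e)"
        by simp
      then show ?thesis
        using K Cw r by (intro mult_left_mono add_mono sum_mono) auto
    qed
    also have "\<dots> = K * (2 * pi + (\<Sum>w\<in>W. Cw w)) * (1 - r) powr (- \<beta> - e)"
      by (simp add: sum_distrib_right algebra_simps)
    finally show "integral {-pi..pi} (dist_weight W \<alpha> r) \<le> K * (2 * pi + (\<Sum>w\<in>W. Cw w)) * (1 - r) powr (- \<beta> - e)" .
  qed
qed

lemma norm_rcis_minus_cis_le:
  assumes "r \<le> 1"
  shows "cmod (complex_of_real r * cis \<theta> - cis \<phi>) \<le> (1 - r) + \<bar>\<theta> - \<phi>\<bar>"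
  using norm_triangle_ineq[of "complex_of_real r * cis \<theta> - cis \<theta>" "cis \<theta> - cis \<phi>"]
    norm_cis_minus_rcis[OF assms, of \<theta>] norm_cis_diff_le[of \<theta> \<phi>]
  by (simp add: norm_minus_commute)

lemma integral_dist_weight_ge_const:
  assumes W: "finite W" "\<forall>w\<in>W. cmod w = 1"
  shows "\<exists>c>0. \<forall>\<^sub>F r in at_left 1. c \<le> integral {-pi..pi} (dist_weight W \<alpha> r)"
proof -
  have "infinite ({-1/2..1/2::real} - Im ` W)"
    by (rule Diff_infinite_finite) (use W in auto)
  then obtain y where y: "y \<in> {-1/2..1/2}" "y \<notin> Im ` W"
    using infinite_imp_nonempty by blast
  define \<theta>0 where "\<theta>0 = arcsin y"
  have \<theta>0: "- (pi / 2) \<le> \<theta>0" "\<theta>0 \<le> pi / 2"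
    unfolding \<theta>0_def using y arcsin_bounded[of y] by auto
  have "\<forall>w\<in>W. 0 < cmod (cis \<theta>0 - w)"
    using y unfolding \<theta>0_def by (auto simp: image_iff)
  then obtain d where d: "0 < d" "d \<le> 1" "\<forall>w\<in>W. d \<le> cmod (cis \<theta>0 - w)"
    by (rule finite_positive_lower_bound[OF W(1)])
  define v where "v = (\<Prod>w\<in>W. min ((d / 2) powr \<alpha> w) (2 powr \<alpha> w))"
  have "0 < v"
    unfolding v_def using d by (intro prod_pos) auto
  have "v * (d / 2) \<le> integral {-pi..pi} (dist_weight W \<alpha> r)" if r: "r \<in> {1 - d / 4<..<1}" for r
  proof -
    have "v * ((\<theta>0 + d / 4) - (\<theta>0 - d / 4)) \<le> integral {-pi..pi} (dist_weight W \<alpha> r)"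
    proof (rule integral_ge_on_subinterval)
      show "continuous_on {-pi..pi} (dist_weight W \<alpha> r)"
        using r d W by (intro continuous_on_dist_weight) auto
      show "-pi \<le> \<theta>0 - d / 4" "\<theta>0 - d / 4 \<le> \<theta>0 + d / 4" "\<theta>0 + d / 4 \<le> pi"
        using \<theta>0 d pi_gt3 by auto
      show "\<forall>\<theta>\<in>{\<theta>0 - d / 4..\<theta>0 + d / 4}. v \<le> dist_weight W \<alpha> r \<theta>"
      proof
        fix \<theta>
        assume \<theta>: "\<theta> \<in> {\<theta>0 - d / 4..\<theta>0 + d / 4}"
        have "d / 2 \<le> cmod (complex_of_real r * cis \<theta> - w)" if "w \<in> W" for w
          using d(3) that r \<theta> norm_rcis_minus_cis_le[of r \<theta> \<theta>0]
            norm_triangle_ineq4[of "complex_of_real r * cis \<theta> - cis \<theta>0" "complex_of_real r * cis \<theta> - w"]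
          by (auto simp: norm_minus_commute abs_le_iff)
        then show "v \<le> dist_weight W \<alpha> r \<theta>"
          unfolding v_def using W r d by (intro dist_weight_ge_if_far) auto
      qed
    qed (simp add: dist_weight_nonneg)
    then show ?thesis
      by simp
  qed
  moreover have "\<forall>\<^sub>F r in at_left 1. r \<in> {1 - d / 4<..<1}"
    using d by (intro eventually_at_left_real) simp
  ultimately have "\<forall>\<^sub>F r in at_left 1. v * (d / 2) \<le> integral {-pi..pi} (dist_weight W \<alpha> r)"
    by (auto elim: eventually_mono)
  then show ?thesis
    using \<open>0 < v\<close> d by (intro exI[of _ "v * (d / 2)"]) auto
qed

lemma dist_weight_ge_near_point:
  assumes W: "finite W" "\<forall>w\<in>W. cmod w = 1" and w0: "w0 \<in> W" "\<alpha> w0 < 0" "cis \<phi> = w0"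
    and d: "0 < d" "\<forall>w\<in>W - {w0}. d \<le> cmod (w0 - w)"
    and r: "0 \<le> r" "r < 1" "4 * (1 - r) \<le> d" and \<theta>: "\<bar>\<theta> - \<phi>\<bar> \<le> 1 - r"
  shows "(\<Prod>w\<in>W - {w0}. min ((d / 2) powr \<alpha> w) (2 powr \<alpha> w)) * (2 * (1 - r)) powr \<alpha> w0
    \<le> dist_weight W \<alpha> r \<theta>"
proof -
  let ?z = "complex_of_real r * cis \<theta>"
  have near: "cmod (?z - w0) \<le> 2 * (1 - r)"
    using norm_rcis_minus_cis_le[of r \<theta> \<phi>] r \<theta> w0 by auto
  have "1 - r \<le> cmod (?z - w0)"
    using r W w0 by (intro norm_rcis_minus_unit_ge) auto
  then have factor: "(2 * (1 - r)) powr \<alpha> w0 \<le> cmod (?z - w0) powr \<alpha> w0"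
    using w0 near r by (intro powr_mono2') auto
  have "d / 2 \<le> cmod (?z - w)" if "w \<in> W - {w0}" for w
  proof -
    have "d \<le> cmod (w0 - w)"
      using d(2) that by blast
    moreover have "cmod (w0 - w) \<le> cmod (w0 - ?z) + cmod (?z - w)"
      by (rule norm_diff_triangle_le) auto
    moreover have "cmod (w0 - ?z) \<le> 2 * (1 - r)"
      using near by (simp add: norm_minus_commute)
    ultimately show ?thesis
      using r by linarith
  qed
  then have "(\<Prod>w\<in>W - {w0}. min ((d / 2) powr \<alpha> w) (2 powr \<alpha> w)) \<le> dist_weight (W - {w0}) \<alpha> r \<theta>"
    using W r d by (intro dist_weight_ge_if_far) auto
  from mult_mono[OF this factor] show ?thesis
    unfolding dist_weight_remove[OF W(1) w0(1)] by (simp add: dist_weight_nonneg mult.commute)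
qed

lemma integral_dist_weight_ge_powr:
  assumes W: "finite W" "\<forall>w\<in>W. cmod w = 1" and w0: "w0 \<in> W" "\<alpha> w0 < 0"
  shows "\<exists>c>0. \<forall>\<^sub>F r in at_left 1. c * (1 - r) powr (\<alpha> w0 + 1) \<le> integral {-pi..pi} (dist_weight W \<alpha> r)"
proof -
  define \<phi> where "\<phi> = Arg w0"
  have "cis \<phi> = w0"
    using W w0 cis_Arg[of w0] unfolding \<phi>_def by (force simp: sgn_div_norm)
  have \<phi>: "-pi < \<phi>" "\<phi> \<le> pi"
    using Arg_bounded unfolding \<phi>_def by auto
  obtain d where d: "0 < d" "d \<le> 1" "\<forall>w\<in>W - {w0}. d \<le> cmod (w0 - w)"
    by (rule finite_positive_lower_bound[of "W - {w0}" "\<lambda>w. cmod (w0 - w)"]) (use W in auto)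
  define v where "v = (\<Prod>w\<in>W - {w0}. min ((d / 2) powr \<alpha> w) (2 powr \<alpha> w))"
  have "0 < v"
    unfolding v_def using d by (intro prod_pos) auto
  have "v * 2 powr \<alpha> w0 * (1 - r) powr (\<alpha> w0 + 1) \<le> integral {-pi..pi} (dist_weight W \<alpha> r)"
    if r: "r \<in> {1 - d / 4<..<1}" for r
  proof -
    define h where "h = 1 - r"
    have h: "0 < h" "h \<le> d / 4"
      using r unfolding h_def by auto
    obtain a where a: "-pi \<le> a" "a + h \<le> pi" "\<forall>\<theta>\<in>{a..a + h}. \<bar>\<theta> - \<phi>\<bar> \<le> h"
    proof (cases "\<phi> \<le> 0")
      case True
      then show ?thesis
        using that[of \<phi>] \<phi> h d pi_gt3 by auto
    next
      case False
      then show ?thesis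
        using that[of "\<phi> - h"] \<phi> h d pi_gt3 by auto
    qed
    have "(v * (2 * h) powr \<alpha> w0) * ((a + h) - a) \<le> integral {-pi..pi} (dist_weight W \<alpha> r)"
    proof (rule integral_ge_on_subinterval)
      show "continuous_on {-pi..pi} (dist_weight W \<alpha> r)"
        using r d W by (intro continuous_on_dist_weight) auto
      show "\<forall>\<theta>\<in>{a..a + h}. v * (2 * h) powr \<alpha> w0 \<le> dist_weight W \<alpha> r \<theta>"
        unfolding v_def h_def using W w0 \<open>cis \<phi> = w0\<close> d r a(3) h
        by (intro ballI dist_weight_ge_near_point) (auto simp: h_def)
    qed (use a h in \<open>auto simp: dist_weight_nonneg\<close>)
    also have "(v * (2 * h) powr \<alpha> w0) * ((a + h) - a) = v * 2 powr \<alpha> w0 * h powr (\<alpha> w0 + 1)"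
      using h by (simp add: powr_mult powr_add)
    finally show ?thesis
      unfolding h_def .
  qed
  moreover have "\<forall>\<^sub>F r in at_left 1. r \<in> {1 - d / 4<..<1}"
    using d by (intro eventually_at_left_real) simp
  ultimately have "\<forall>\<^sub>F r in at_left 1.
      v * 2 powr \<alpha> w0 * (1 - r) powr (\<alpha> w0 + 1) \<le> integral {-pi..pi} (dist_weight W \<alpha> r)"
    by (auto elim: eventually_mono)
  then show ?thesis
    using \<open>0 < v\<close> by (intro exI[of _ "v * 2 powr \<alpha> w0"]) auto
qed

theorem dist_weight_has_growth_exponent:
  assumes W: "finite W" "\<forall>w\<in>W. cmod w = 1"
  shows "has_growth_exponent (\<lambda>r. integral {-pi..pi} (dist_weight W \<alpha> r))
           (Max (insert 0 ((\<lambda>w. - \<alpha> w - 1) ` W)))"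
  (is "has_growth_exponent ?J ?\<beta>")
  unfolding has_growth_exponent_def
proof (intro conjI allI impI)
  have "?\<beta> \<in> insert 0 ((\<lambda>w. - \<alpha> w - 1) ` W)"
    using W by (intro Max_in) auto
  then consider "?\<beta> = 0" | w0 where "w0 \<in> W" "?\<beta> = - \<alpha> w0 - 1" "\<alpha> w0 < 0"
    using Max_ge[of "insert 0 ((\<lambda>w. - \<alpha> w - 1) ` W)" 0] W by fastforce
  then show "\<exists>c>0. \<forall>\<^sub>F r in at_left 1. c * (1 - r) powr (- ?\<beta>) \<le> ?J r"
  proof cases
    case 1
    obtain c where "0 < c" "\<forall>\<^sub>F r in at_left 1. c \<le> ?J r"
      using integral_dist_weight_ge_const[OF W] by blast
    moreover have "\<forall>\<^sub>F r in at_left 1. r < (1::real)"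
      by (simp add: eventually_at_filter)
    ultimately show ?thesis
      using 1 by (auto elim: eventually_elim2)
  next
    case 2
    then show ?thesis
      using integral_dist_weight_ge_powr[OF W, of w0 \<alpha>] by (simp add: add.commute)
  qed
  fix e :: real
  assume "0 < e"
  moreover have "0 \<le> ?\<beta>" "\<forall>w\<in>W. - \<alpha> w - 1 \<le> ?\<beta>"
    using W by (auto intro: Max_ge)
  ultimately obtain C where C: "\<forall>r. 0 \<le> r \<and> r < 1 \<longrightarrow> ?J r \<le> C * (1 - r) powr (- ?\<beta> - e)"
    using integral_dist_weight_le[OF W] by blast
  have "\<forall>\<^sub>F r in at_left 1. r \<in> {0<..<1::real}"
    by (intro eventually_at_left_real) simp
  then have "\<forall>\<^sub>F r in at_left 1. ?J r \<le> C * (1 - r) powr (- ?\<beta> - e)"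
    by (rule eventually_mono) (use C in auto)
  then show "\<exists>C. \<forall>\<^sub>F r in at_left 1. ?J r \<le> C * (1 - r) powr (- ?\<beta> - e)"
    by blast
qed

section \<open>Uniform bounds near the unit circle\<close>

lemma dist_sgn_complex:
  fixes z :: complex
  assumes "z \<noteq> 0"
  shows "dist z (sgn z) = \<bar>1 - cmod z\<bar>"
proof -
  have "z - sgn z = complex_of_real (1 - 1 / cmod z) * z"
    using assms by (simp add: sgn_div_norm scaleR_conv_of_real algebra_simps divide_inverse)
  then have "dist z (sgn z) = \<bar>1 - 1 / cmod z\<bar> * cmod z"
    by (simp only: dist_norm norm_mult norm_of_real)
  also have "\<dots> = \<bar>cmod z - 1\<bar>"
    using assms by (simp add: abs_mult[symmetric] field_simps)
  finally show ?thesis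
    by simp
qed

lemma locally_bounded_if_tendsto_pos:
  fixes G :: "'a::metric_space \<Rightarrow> real"
  assumes "(G \<longlongrightarrow> L) (at u)" "0 < L"
  obtains \<epsilon> c C where "0 < \<epsilon>" "0 < c" "\<And>z. z \<noteq> u \<Longrightarrow> dist z u < \<epsilon> \<Longrightarrow> c \<le> G z \<and> G z \<le> C"
proof -
  have "\<forall>\<^sub>F z in at u. dist (G z) L < L / 2"
    using tendstoD[OF assms(1), of "L / 2"] assms(2) by simp
  then obtain \<epsilon> where \<epsilon>: "0 < \<epsilon>" "\<And>z. z \<noteq> u \<Longrightarrow> dist z u < \<epsilon> \<Longrightarrow> dist (G z) L < L / 2"
    unfolding eventually_at by auto
  show ?thesis
  proof (rule that[of \<epsilon> "L / 2" "3 * L / 2"])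
    fix z
    assume "z \<noteq> u" "dist z u < \<epsilon>"
    then have "\<bar>G z - L\<bar> < L / 2"
      using \<epsilon>(2) by (simp add: dist_real_def)
    then show "L / 2 \<le> G z \<and> G z \<le> 3 * L / 2"
      unfolding abs_less_iff by linarith
  qed (use \<epsilon> assms(2) in auto)
qed

lemma uniform_bounds_near_unit_circle:
  fixes G :: "complex \<Rightarrow> real"
  assumes lim: "\<And>u. cmod u = 1 \<Longrightarrow> \<exists>L>0. (G \<longlongrightarrow> L) (at u)"
  obtains r0 c C where "r0 < 1" "0 < c" "\<And>z. r0 < cmod z \<Longrightarrow> cmod z < 1 \<Longrightarrow> c \<le> G z \<and> G z \<le> C"
proof -
  have "\<forall>u\<in>sphere 0 1. \<exists>\<epsilon> c C. 0 < \<epsilon> \<and> 0 < c \<and>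
      (\<forall>z. z \<noteq> u \<and> dist z u < \<epsilon> \<longrightarrow> c \<le> G z \<and> G z \<le> C)"
  proof
    fix u :: complex
    assume "u \<in> sphere 0 1"
    then obtain L where "0 < L" "(G \<longlongrightarrow> L) (at u)"
      using lim by auto
    then show "\<exists>\<epsilon> c C. 0 < \<epsilon> \<and> 0 < c \<and> (\<forall>z. z \<noteq> u \<and> dist z u < \<epsilon> \<longrightarrow> c \<le> G z \<and> G z \<le> C)"
      by (metis locally_bounded_if_tendsto_pos)
  qed
  then obtain \<epsilon> c C where local: "\<And>u. u \<in> sphere 0 1 \<Longrightarrow> 0 < \<epsilon> u \<and> 0 < c u \<and>
      (\<forall>z. z \<noteq> u \<and> dist z u < \<epsilon> u \<longrightarrow> c u \<le> G z \<and> G z \<le> C u)"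
    by metis
  have cover: "sphere 0 1 \<subseteq> (\<Union>u\<in>sphere 0 1. ball u (\<epsilon> u))"
    using local by force
  obtain U where U: "U \<subseteq> sphere 0 1" "finite U" "sphere 0 1 \<subseteq> (\<Union>u\<in>U. ball u (\<epsilon> u))"
    by (rule compactE_image[OF compact_sphere _ cover]) auto
  obtain \<delta> where \<delta>: "0 < \<delta>" "\<And>x. x \<in> sphere 0 1 \<Longrightarrow> \<exists>u\<in>U. ball x \<delta> \<subseteq> ball u (\<epsilon> u)"
    by (rule Heine_Borel_lemma[OF compact_sphere[of "0::complex" 1], where \<G> = "(\<lambda>u. ball u (\<epsilon> u)) ` U"])
       (use U in auto)
  show ?thesis
  proof (rule that)
    show "max 0 (1 - \<delta>) < 1" "0 < Min (insert 1 (c ` U))"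
      using \<delta> U local by auto
    fix z :: complex
    assume z: "max 0 (1 - \<delta>) < cmod z" "cmod z < 1"
    then have "z \<noteq> 0"
      by auto
    then obtain u where u: "u \<in> U" "z \<in> ball u (\<epsilon> u)"
      using \<delta>(2)[of "sgn z"] dist_sgn_complex[of z] z by (force simp: norm_sgn dist_commute)
    moreover have "z \<noteq> u"
      using u U z by auto
    ultimately have "c u \<le> G z \<and> G z \<le> C u"
      using local[of u] U by (auto simp: dist_commute)
    then show "Min (insert 1 (c ` U)) \<le> G z \<and> G z \<le> Max (insert 0 (C ` U))"
      using u U by (meson Max_ge Min_le finite_imageI finite_insert image_eqI insertI2 order_trans)
  qed
qed

section \<open>The derivative of a rational function near the unit circle\<close>

definition ratfun_deriv :: "complex poly \<Rightarrow> complex poly \<Rightarrow> complex \<Rightarrow> complex" where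
  "ratfun_deriv p q z = poly (pderiv p * q - p * pderiv q) z / (poly q z)\<^sup>2"

lemma deriv_ratfun:
  assumes "poly q z \<noteq> 0"
  shows "deriv (ratfun p q) z = ratfun_deriv p q z"
proof -
  have "(ratfun p q has_field_derivative
      (poly (pderiv p) z * poly q z - poly p z * poly (pderiv q) z) / (poly q z * poly q z)) (at z)"
    unfolding ratfun_def by (rule DERIV_divide[OF poly_DERIV poly_DERIV assms])
  then show ?thesis
    unfolding ratfun_deriv_def by (simp add: DERIV_imp_deriv power2_eq_square)
qed

lemma isCont_ratfun_deriv:
  assumes "poly q u \<noteq> 0"
  shows "isCont (ratfun_deriv p q) u"
  unfolding ratfun_deriv_def[abs_def] using assms by (intro continuous_intros) auto

lemma eventually_poly_nonzero:
  fixes q :: "complex poly"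
  assumes "poly q u \<noteq> 0"
  shows "\<forall>\<^sub>F z in at u. poly q z \<noteq> 0"
  using poly_isCont[where p=q and x=u] assms tendsto_imp_eventually_ne
  unfolding isCont_def by blast

lemma ratfun_deriv_mult_power_at_pole:
  assumes q: "q = [:-u, 1:] ^ n * q1" and n: "1 \<le> n" and z: "z \<noteq> u" "poly q1 z \<noteq> 0"
  shows "ratfun_deriv p q z * (z - u) ^ (n + 1) =
    ((z - u) * (poly (pderiv p) z * poly q1 z - poly p z * poly (pderiv q1) z)
      - of_nat n * (poly p z * poly q1 z)) / (poly q1 z)\<^sup>2"
proof -
  obtain m where m: "n = Suc m"
    using n by (cases n) auto
  have qz: "poly q z = (z - u) ^ n * poly q1 z"
    unfolding q by simp
  have pq: "poly (pderiv q) z = of_nat n * (z - u) ^ m * poly q1 z + (z - u) ^ n * poly (pderiv q1) z"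
    unfolding q m pderiv_mult pderiv_power_Suc by (simp add: pderiv_pCons del: power_Suc)
  define N where "N = pderiv p * q - p * pderiv q"
  have "poly N z * (z - u) =
      (poly (pderiv p) z * ((z - u) ^ n * poly q1 z) - poly p z *
        (of_nat n * (z - u) ^ m * poly q1 z + (z - u) ^ n * poly (pderiv q1) z)) * (z - u)"
    by (simp add: N_def pq qz)
  also have "\<dots> = (z - u) ^ n * ((z - u) * (poly (pderiv p) z * poly q1 z - poly p z * poly (pderiv q1) z)
      - of_nat n * (poly p z * poly q1 z))"
    unfolding m by (simp add: algebra_simps)
  finally have N: "poly N z * (z - u) = \<dots>" .
  have "ratfun_deriv p q z * (z - u) ^ (n + 1) =
      (poly N z * (z - u)) * (z - u) ^ n / ((z - u) ^ n * poly q1 z)\<^sup>2"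
    unfolding ratfun_deriv_def N_def[symmetric] qz by (simp add: algebra_simps)
  also have "\<dots> = ((z - u) * (poly (pderiv p) z * poly q1 z - poly p z * poly (pderiv q1) z)
      - of_nat n * (poly p z * poly q1 z)) / (poly q1 z)\<^sup>2"
    unfolding N using z by (simp add: field_simps power2_eq_square)
  finally show ?thesis .
qed

lemma ratfun_deriv_pole_limit:
  assumes q: "q = [:-u, 1:] ^ n * q1" and q1: "poly q1 u \<noteq> 0" and n: "1 \<le> n" and p: "poly p u \<noteq> 0"
  shows "((\<lambda>z. cmod (ratfun_deriv p q z) / cmod (z - u) powr (- (real n + 1))) \<longlongrightarrow>
           real n * cmod (poly p u) / cmod (poly q1 u)) (at u)"
proof -
  define \<Psi> where "\<Psi> = (\<lambda>z. ((z - u) * (poly (pderiv p) z * poly q1 z - poly p z * poly (pderiv q1) z)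
      - of_nat n * (poly p z * poly q1 z)) / (poly q1 z)\<^sup>2)"
  have "isCont \<Psi> u"
    unfolding \<Psi>_def using q1 by (intro continuous_intros) auto
  then have "((\<lambda>z. cmod (\<Psi> z)) \<longlongrightarrow> cmod (\<Psi> u)) (at u)"
    unfolding isCont_def by (rule tendsto_norm)
  moreover have "cmod (\<Psi> u) = real n * cmod (poly p u) / cmod (poly q1 u)"
    unfolding \<Psi>_def using q1 by (simp add: norm_mult norm_divide power2_eq_square)
  moreover have "cmod (ratfun_deriv p q z) / cmod (z - u) powr (- (real n + 1)) = cmod (\<Psi> z)"
    if z: "z \<noteq> u" "poly q1 z \<noteq> 0" for z
  proof -
    have "cmod (ratfun_deriv p q z) * cmod (z - u) ^ (n + 1) = cmod (\<Psi> z)"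
      using ratfun_deriv_mult_power_at_pole[OF q n z] unfolding \<Psi>_def by (metis norm_mult norm_power)
    moreover have "cmod (z - u) powr real (n + 1) = cmod (z - u) ^ (n + 1)"
      using z by (intro powr_realpow) simp
    moreover have "- (real n + 1) = - real (n + 1)"
      by simp
    ultimately show ?thesis
      by (simp only: powr_minus divide_inverse inverse_inverse_eq)
  qed
  moreover have "\<forall>\<^sub>F z in at u. z \<noteq> u \<and> poly q1 z \<noteq> 0"
    using eventually_poly_nonzero[OF q1] by (simp add: eventually_at_filter)
  ultimately show ?thesis
    by (auto elim!: Lim_transform_eventually eventually_mono)
qed

lemma ratfun_deriv_critical_limit:
  fixes A B :: "complex poly"
  assumes eq: "(\<Prod>z\<in>Z. [:-z, 1:]) * A * q\<^sup>2 = (pderiv p * q - p * pderiv q) * B"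
    and Z: "finite Z" "u \<in> Z" and q: "poly q u \<noteq> 0" and B: "poly B u \<noteq> 0"
  shows "((\<lambda>z. cmod (ratfun_deriv p q z) / cmod (z - u) powr 1) \<longlongrightarrow>
           cmod ((\<Prod>v\<in>Z - {u}. u - v) * poly A u / poly B u)) (at u)"
proof -
  define \<Theta> where "\<Theta> = (\<lambda>z. (\<Prod>v\<in>Z - {u}. z - v) * poly A z / poly B z)"
  have "isCont \<Theta> u"
    unfolding \<Theta>_def using B by (intro continuous_intros) auto
  then have "((\<lambda>z. cmod (\<Theta> z)) \<longlongrightarrow> cmod (\<Theta> u)) (at u)"
    unfolding isCont_def by (rule tendsto_norm)
  moreover have "cmod (ratfun_deriv p q z) / cmod (z - u) powr 1 = cmod (\<Theta> z)"
    if z: "z \<noteq> u" "poly q z \<noteq> 0" "poly B z \<noteq> 0" for z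
  proof -
    have "(\<Prod>v\<in>Z. z - v) * poly A z * (poly q z)\<^sup>2 = poly (pderiv p * q - p * pderiv q) z * poly B z"
      using arg_cong[OF eq, of "\<lambda>P. poly P z"] by (simp add: poly_prod)
    then have "ratfun_deriv p q z = (\<Prod>v\<in>Z. z - v) * poly A z / poly B z"
      unfolding ratfun_deriv_def using z by (simp add: field_simps)
    also have "\<dots> = (z - u) * \<Theta> z"
      unfolding \<Theta>_def prod.remove[OF Z] by simp
    finally show ?thesis
      using z by (simp add: norm_mult)
  qed
  moreover have "\<forall>\<^sub>F z in at u. z \<noteq> u \<and> poly q z \<noteq> 0 \<and> poly B z \<noteq> 0"
    using eventually_poly_nonzero[OF q] eventually_poly_nonzero[OF B]
    by (auto simp: eventually_conj_iff eventually_at_filter elim: eventually_mono)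
  ultimately show ?thesis
    unfolding \<Theta>_def by (auto elim!: Lim_transform_eventually eventually_mono)
qed

lemma tendsto_prod_norm_diff_powr:
  fixes S :: "complex set" and k :: "complex \<Rightarrow> real"
  assumes "finite S" "u \<notin> S"
  shows "((\<lambda>z. \<Prod>w\<in>S. cmod (z - w) powr k w) \<longlongrightarrow> (\<Prod>w\<in>S. cmod (u - w) powr k w)) (at u)"
    and "0 < (\<Prod>w\<in>S. cmod (u - w) powr k w)"
  using assms by (auto intro!: tendsto_prod tendsto_intros prod_pos)

lemma tendsto_div_prod_norm_diff_powr_mem:
  fixes W :: "complex set" and k :: "complex \<Rightarrow> real" and F :: "complex \<Rightarrow> real"
  assumes W: "finite W" "u \<in> W" and lim: "((\<lambda>z. F z / cmod (z - u) powr k u) \<longlongrightarrow> L) (at u)" "0 < L"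
  shows "\<exists>L'>0. ((\<lambda>z. F z / (\<Prod>w\<in>W. cmod (z - w) powr k w)) \<longlongrightarrow> L') (at u)"
proof -
  have rest: "finite (W - {u})" "u \<notin> W - {u}"
    using W by auto
  have "(\<lambda>z. F z / (\<Prod>w\<in>W. cmod (z - w) powr k w)) =
      (\<lambda>z. (F z / cmod (z - u) powr k u) / (\<Prod>w\<in>W - {u}. cmod (z - w) powr k w))"
    by (simp add: prod.remove[OF W] divide_divide_eq_left)
  then show ?thesis
    using tendsto_divide[OF lim(1) tendsto_prod_norm_diff_powr(1)[OF rest, of k]]
      tendsto_prod_norm_diff_powr(2)[OF rest, of k] lim(2)
    by (intro exI[of _ "L / (\<Prod>w\<in>W - {u}. cmod (u - w) powr k w)"]) auto
qed

lemma tendsto_div_prod_norm_diff_powr_nonmem: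
  fixes W :: "complex set" and k :: "complex \<Rightarrow> real" and F :: "complex \<Rightarrow> real"
  assumes W: "finite W" "u \<notin> W" and lim: "(F \<longlongrightarrow> L) (at u)" "0 < L"
  shows "\<exists>L'>0. ((\<lambda>z. F z / (\<Prod>w\<in>W. cmod (z - w) powr k w)) \<longlongrightarrow> L') (at u)"
  using tendsto_divide[OF lim(1) tendsto_prod_norm_diff_powr(1)[OF W]]
    tendsto_prod_norm_diff_powr(2)[OF W, of k] lim(2)
  by (intro exI[of _ "L / (\<Prod>w\<in>W. cmod (u - w) powr k w)"]) auto

section \<open>The generalized integral means spectrum\<close>

definition circle_poles :: "complex poly \<Rightarrow> complex set" where
  "circle_poles q = {u. cmod u = 1 \<and> poly q u = 0}"

text \<open>Near a point \<open>w\<close> of the unit circle, \<open>|R'(z)|\<close> behaves like \<open>|z - w|\<close> to the power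
  \<open>deriv_exponent q w\<close>: a critical point of a function in \<open>\<R>\<^sub>O\<close> is a simple zero of \<open>R'\<close>,
  and a pole of order \<open>m\<close> of \<open>R\<close> is a pole of order \<open>m + 1\<close> of \<open>R'\<close>.\<close>

definition deriv_exponent :: "complex poly \<Rightarrow> complex \<Rightarrow> real" where
  "deriv_exponent q w = (if poly q w = 0 then - (real (order w q) + 1) else 1)"

context
  fixes p q :: "complex poly"
  assumes RO: "classRO p q"
begin

lemma classRO_q_nonzero: "q \<noteq> 0"
  and classRO_coprime: "coprime p q"
  and classRO_no_poles_in_disc: "cmod z < 1 \<Longrightarrow> poly q z \<noteq> 0"
  using RO unfolding classRO_def classR_def by auto

lemma finite_crit_T: "finite (crit_T p q)"
  using RO unfolding classRO_def by blast

lemma finite_circle_poles: "finite (circle_poles q)"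
  unfolding circle_poles_def using poly_roots_finite[OF classRO_q_nonzero] by simp

lemma ratfun_deriv_local_ratio:
  assumes u: "cmod u = 1"
  shows "\<exists>L>0. ((\<lambda>z. cmod (ratfun_deriv p q z) /
           (\<Prod>w\<in>crit_T p q \<union> circle_poles q. cmod (z - w) powr deriv_exponent q w)) \<longlongrightarrow> L) (at u)"
proof -
  let ?W = "crit_T p q \<union> circle_poles q"
  have W: "finite ?W"
    using finite_crit_T finite_circle_poles by simp
  consider "u \<in> circle_poles q" | "u \<in> crit_T p q" | "u \<notin> ?W"
    by blast
  then show ?thesis
  proof cases
    case 1
    then have "poly q u = 0"
      unfolding circle_poles_def by simp
    then have order_pos: "1 \<le> order u q" and p: "poly p u \<noteq> 0"
      using order_root[of q u] classRO_q_nonzero coprime_poly_0[OF classRO_coprime, of u] by auto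
    obtain q1 where q1: "q = [:-u, 1:] ^ order u q * q1" "\<not> [:-u, 1:] dvd q1"
      using order_decomp[OF classRO_q_nonzero] by blast
    then have "poly q1 u \<noteq> 0"
      by (simp add: poly_eq_0_iff_dvd)
    from ratfun_deriv_pole_limit[OF q1(1) this order_pos p] \<open>poly q u = 0\<close> this p
    show ?thesis
      by (intro tendsto_div_prod_norm_diff_powr_mem[OF W]) (use order_pos in \<open>auto simp: deriv_exponent_def 1\<close>)
  next
    case 2
    obtain A B where eq: "(\<Prod>z\<in>crit_T p q. [:-z, 1:]) * A * q\<^sup>2 = (pderiv p * q - p * pderiv q) * B"
      and cop: "coprime ((\<Prod>z\<in>crit_T p q. [:-z, 1:]) * A) B"
      and A: "\<forall>z. cmod z = 1 \<longrightarrow> poly A z \<noteq> 0"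
      using RO unfolding classRO_def by blast
    have q: "poly q u \<noteq> 0"
      using 2 unfolding crit_T_def by simp
    have B: "poly B u \<noteq> 0"
      using coprime_poly_0[OF cop, of u] 2 finite_crit_T by (auto simp: poly_prod)
    have "(\<Prod>v\<in>crit_T p q - {u}. u - v) \<noteq> 0"
      using finite_crit_T by auto
    with ratfun_deriv_critical_limit[OF eq finite_crit_T 2 q B] A u B q
    show ?thesis
      by (intro tendsto_div_prod_norm_diff_powr_mem[OF W]) (auto simp: deriv_exponent_def 2)
  next
    case 3
    then have q: "poly q u \<noteq> 0" and "deriv (ratfun p q) u \<noteq> 0"
      using u unfolding circle_poles_def crit_T_def by auto
    then have "ratfun_deriv p q u \<noteq> 0"
      by (simp add: deriv_ratfun)
    moreover have "((\<lambda>z. cmod (ratfun_deriv p q z)) \<longlongrightarrow> cmod (ratfun_deriv p q u)) (at u)"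
      using isCont_ratfun_deriv[OF q] unfolding isCont_def by (rule tendsto_norm)
    ultimately show ?thesis
      by (intro tendsto_div_prod_norm_diff_powr_nonmem[OF W 3]) auto
  qed
qed

lemma norm_ratfun_deriv_powr_comparable:
  fixes \<tau> :: real
  defines "W \<equiv> crit_T p q \<union> circle_poles q" and "\<alpha> \<equiv> \<lambda>w. deriv_exponent q w * \<tau>"
  obtains r0 c C where "0 \<le> r0" "r0 < 1" "0 < c"
    "\<And>r \<theta>. r0 < r \<Longrightarrow> r < 1 \<Longrightarrow> ratfun_deriv p q (complex_of_real r * cis \<theta>) \<noteq> 0 \<and>
       c * dist_weight W \<alpha> r \<theta> \<le> cmod (ratfun_deriv p q (complex_of_real r * cis \<theta>)) powr \<tau> \<and>
       cmod (ratfun_deriv p q (complex_of_real r * cis \<theta>)) powr \<tau> \<le> C * dist_weight W \<alpha> r \<theta>"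
proof -
  have W: "\<forall>w\<in>W. cmod w = 1"
    by (auto simp: W_def crit_T_def circle_poles_def)
  define M where "M = (\<lambda>z. \<Prod>w\<in>W. cmod (z - w) powr deriv_exponent q w)"
  define G where "G = (\<lambda>z. cmod (ratfun_deriv p q z) / M z)"
  have "\<exists>L>0. (G \<longlongrightarrow> L) (at u)" if "cmod u = 1" for u
    unfolding G_def M_def W_def using that by (rule ratfun_deriv_local_ratio)
  then obtain r0 c C where r0: "r0 < 1" and c: "0 < c"
    and G: "\<And>z. r0 < cmod z \<Longrightarrow> cmod z < 1 \<Longrightarrow> c \<le> G z \<and> G z \<le> C"
    using uniform_bounds_near_unit_circle[of G] by blast
  show ?thesis
  proof (rule that[of "max r0 0" "min (c powr \<tau>) (max C c powr \<tau>)" "max (c powr \<tau>) (max C c powr \<tau>)"])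
    fix r \<theta> :: real
    assume r: "max r0 0 < r" "r < 1"
    define z where "z = complex_of_real r * cis \<theta>"
    have "cmod z = r"
      using r by (simp add: z_def norm_mult)
    then have G_bounds: "c \<le> G z" "G z \<le> max C c"
      using G r by force+
    have "0 < M z"
      unfolding M_def using W \<open>cmod z = r\<close> r by (intro prod_pos) force
    then have "cmod (ratfun_deriv p q z) = G z * M z"
      unfolding G_def by simp
    moreover have "M z powr \<tau> = dist_weight W \<alpha> r \<theta>"
      unfolding M_def dist_weight_def \<alpha>_def z_def prod_powr_distrib
      by (intro prod.cong refl) (simp add: powr_powr)
    ultimately have "cmod (ratfun_deriv p q z) powr \<tau> = G z powr \<tau> * dist_weight W \<alpha> r \<theta>"
      using G_bounds c \<open>0 < M z\<close> by (simp add: powr_mult)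
    moreover have "min (c powr \<tau>) (max C c powr \<tau>) \<le> G z powr \<tau>" "G z powr \<tau> \<le> max (c powr \<tau>) (max C c powr \<tau>)"
      using G_bounds c by (auto intro: powr_between)
    ultimately show "ratfun_deriv p q z \<noteq> 0 \<and>
       min (c powr \<tau>) (max C c powr \<tau>) * dist_weight W \<alpha> r \<theta> \<le> cmod (ratfun_deriv p q z) powr \<tau> \<and>
       cmod (ratfun_deriv p q z) powr \<tau> \<le> max (c powr \<tau>) (max C c powr \<tau>) * dist_weight W \<alpha> r \<theta>"
      using \<open>cmod (ratfun_deriv p q z) = G z * M z\<close> G_bounds c \<open>0 < M z\<close> dist_weight_nonneg[of W \<alpha> r \<theta>]
      by (auto intro: mult_right_mono)
  qed (use r0 c in auto)
qed

lemma integral_ratfun_deriv_comparable: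
  fixes \<tau> :: real
  defines "W \<equiv> crit_T p q \<union> circle_poles q" and "\<alpha> \<equiv> \<lambda>w. deriv_exponent q w * \<tau>"
  shows "\<exists>c>0. \<exists>C. \<forall>\<^sub>F r in at_left 1.
    c * integral {-pi..pi} (dist_weight W \<alpha> r)
      \<le> integral {-pi..pi} (\<lambda>\<theta>. cmod (deriv (ratfun p q) (complex_of_real r * cis \<theta>)) powr \<tau>) \<and>
    integral {-pi..pi} (\<lambda>\<theta>. cmod (deriv (ratfun p q) (complex_of_real r * cis \<theta>)) powr \<tau>)
      \<le> C * integral {-pi..pi} (dist_weight W \<alpha> r)"
proof -
  have W: "\<forall>w\<in>W. cmod w = 1"
    by (auto simp: W_def crit_T_def circle_poles_def)
  obtain r0 c C where r0: "0 \<le> r0" "r0 < 1" and c: "0 < c"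
    and pointwise: "\<And>r \<theta>. r0 < r \<Longrightarrow> r < 1 \<Longrightarrow> ratfun_deriv p q (complex_of_real r * cis \<theta>) \<noteq> 0 \<and>
       c * dist_weight W \<alpha> r \<theta> \<le> cmod (ratfun_deriv p q (complex_of_real r * cis \<theta>)) powr \<tau> \<and>
       cmod (ratfun_deriv p q (complex_of_real r * cis \<theta>)) powr \<tau> \<le> C * dist_weight W \<alpha> r \<theta>"
    using norm_ratfun_deriv_powr_comparable[of \<tau>] unfolding W_def \<alpha>_def by blast
  have "\<forall>\<^sub>F r in at_left 1. r \<in> {r0<..<1}"
    using r0 by (intro eventually_at_left_real) simp
  then have "\<forall>\<^sub>F r in at_left 1. c * integral {-pi..pi} (dist_weight W \<alpha> r)
      \<le> integral {-pi..pi} (\<lambda>\<theta>. cmod (deriv (ratfun p q) (complex_of_real r * cis \<theta>)) powr \<tau>) \<and>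
    integral {-pi..pi} (\<lambda>\<theta>. cmod (deriv (ratfun p q) (complex_of_real r * cis \<theta>)) powr \<tau>)
      \<le> C * integral {-pi..pi} (dist_weight W \<alpha> r)"
  proof eventually_elim
    case (elim r)
    have q: "poly q (complex_of_real r * cis \<theta>) \<noteq> 0" for \<theta>
      using elim r0 by (intro classRO_no_poles_in_disc) (simp add: norm_mult)
    have "continuous_on {-pi..pi} (\<lambda>\<theta>. ratfun_deriv p q (complex_of_real r * cis \<theta>))"
      unfolding ratfun_deriv_def using q by (intro continuous_intros) auto
    then have "continuous_on {-pi..pi} (\<lambda>\<theta>. cmod (ratfun_deriv p q (complex_of_real r * cis \<theta>)) powr \<tau>)"
      using pointwise elim by (intro continuous_intros) auto
    then show ?case
      unfolding deriv_ratfun[OF q] using elim r0 W pointwise[of r]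
      by (intro integral_comparable_if_pointwise integrable_continuous_interval integrable_dist_weight) auto
  qed
  with c show ?thesis
    by blast
qed

theorem beta_tilde_eq_Max:
  "beta_tilde p q \<tau> =
     Max (insert 0 ((\<lambda>w. - deriv_exponent q w * \<tau> - 1) ` (crit_T p q \<union> circle_poles q)))"
proof -
  let ?W = "crit_T p q \<union> circle_poles q" and ?\<alpha> = "\<lambda>w. deriv_exponent q w * \<tau>"
  let ?f = "\<lambda>r. integral {-pi..pi} (\<lambda>\<theta>. cmod (deriv (ratfun p q) (complex_of_real r * cis \<theta>)) powr \<tau>)"
  have "finite ?W" "\<forall>w\<in>?W. cmod w = 1"
    using finite_crit_T finite_circle_poles by (auto simp: crit_T_def circle_poles_def)
  then have "has_growth_exponent (\<lambda>r. integral {-pi..pi} (dist_weight ?W ?\<alpha> r))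
      (Max (insert 0 ((\<lambda>w. - ?\<alpha> w - 1) ` ?W)))"
    by (rule dist_weight_has_growth_exponent)
  moreover obtain c C where "0 < c" "\<forall>\<^sub>F r in at_left 1.
      c * integral {-pi..pi} (dist_weight ?W ?\<alpha> r) \<le> ?f r \<and> ?f r \<le> C * integral {-pi..pi} (dist_weight ?W ?\<alpha> r)"
    using integral_ratfun_deriv_comparable[of \<tau>] by blast
  ultimately have "has_growth_exponent ?f (Max (insert 0 ((\<lambda>w. - ?\<alpha> w - 1) ` ?W)))"
    by (rule has_growth_exponent_comparable)
  then show ?thesis
    unfolding beta_tilde_def by (simp add: has_growth_exponent_Limsup)
qed

end

lemma order_power_mult_eq:
  fixes q1 :: "'a::idom poly"
  assumes "poly q1 u \<noteq> 0"
  shows "order u ([:-u, 1:] ^ n * q1) = n"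
proof -
  have "q1 \<noteq> 0"
    using assms by auto
  then show ?thesis
    using assms by (simp add: order_mult order_power_n_n order_0I)
qed

corollary beta_tilde_eq_Max_order:
  assumes "classRO p q"
  shows "beta_tilde p q \<tau> = Max (insert 0 ((\<lambda>_. - \<tau> - 1) ` crit_T p q \<union>
           (\<lambda>u. (real (order u q) + 1) * \<tau> - 1) ` circle_poles q))"
proof -
  have "(\<lambda>w. - deriv_exponent q w * \<tau> - 1) ` (crit_T p q \<union> circle_poles q) =
      (\<lambda>_. - \<tau> - 1) ` crit_T p q \<union> (\<lambda>u. (real (order u q) + 1) * \<tau> - 1) ` circle_poles q"
    unfolding image_Un deriv_exponent_def crit_T_def circle_poles_def
    by (intro arg_cong2[where f = "(\<union>)"] image_cong) (auto simp: algebra_simps)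
  then show ?thesis
    using beta_tilde_eq_Max[OF assms] by simp
qed

lemma beta_tilde_classL1:
  assumes "classRO p q" "classL1 p q"
  shows "beta_tilde p q \<tau> = max 0 (if crit_T p q = {} then 0 else - \<tau> - 1)"
proof -
  have "circle_poles q = {}"
    using assms(2) unfolding classL1_def circle_poles_def by auto
  then show ?thesis
    using beta_tilde_eq_Max_order[OF assms(1)] by (simp add: image_constant_conv)
qed

lemma beta_tilde_classL2:
  assumes "classRO p q" "classL2 p q"
  shows "beta_tilde p q \<tau> = max (max 0 (2 * \<tau> - 1)) (if crit_T p q = {} then 0 else - \<tau> - 1)"
proof -
  obtain S m where S: "finite S" "S \<noteq> {}" "\<forall>a\<in>S. cmod a = 1"
    and m: "\<forall>z. cmod z \<le> 1 \<longrightarrow> poly m z \<noteq> 0" and q: "q = (\<Prod>a\<in>S. [:-a, 1:]) * m"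
    using assms(2) unfolding classL2_def by blast
  have q_factor: "q = [:-u, 1:] ^ 1 * ((\<Prod>a\<in>S - {u}. [:-a, 1:]) * m)" if "u \<in> S" for u
    unfolding q using prod.remove[OF S(1) that, of "\<lambda>a. [:-a, 1:]"] by (simp add: ac_simps)
  have "circle_poles q = S"
    using S m unfolding circle_poles_def q by (auto simp: poly_prod)
  moreover have "order u q = 1" if "u \<in> S" for u
    unfolding q_factor[OF that] using S m that by (intro order_power_mult_eq) (auto simp: poly_prod)
  ultimately have "(\<lambda>u. (real (order u q) + 1) * \<tau> - 1) ` circle_poles q = {2 * \<tau> - 1}"
    using S(2) by auto
  then show ?thesis
    using beta_tilde_eq_Max_order[OF assms(1)] by (auto simp: image_constant_conv max_def)
qed

lemma beta_tilde_classL3: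
  assumes "classRO p q" "classL3 p q"
  shows "beta_tilde p q \<tau> = max (max 0 (3 * \<tau> - 1)) (if crit_T p q = {} then 0 else - \<tau> - 1)"
proof -
  obtain S T m where S: "finite S" "S \<noteq> {}" "finite T" "S \<inter> T = {}"
      "\<forall>a\<in>S. cmod a = 1" "\<forall>b\<in>T. cmod b = 1"
    and m: "\<forall>z. cmod z \<le> 1 \<longrightarrow> poly m z \<noteq> 0"
    and q: "q = (\<Prod>a\<in>S. [:-a, 1:] ^ 2) * (\<Prod>b\<in>T. [:-b, 1:]) * m"
    using assms(2) unfolding classL3_def by blast
  have "circle_poles q = S \<union> T"
    using S m unfolding circle_poles_def q by (auto simp: poly_prod)
  moreover have "order u q = 2" if "u \<in> S" for u
  proof -
    have "q = [:-u, 1:] ^ 2 * ((\<Prod>a\<in>S - {u}. [:-a, 1:] ^ 2) * (\<Prod>b\<in>T. [:-b, 1:]) * m)"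
      unfolding q using prod.remove[OF S(1) that, of "\<lambda>a. [:-a, 1:] ^ 2"] by (simp add: ac_simps)
    then show ?thesis
      using S m that by (simp only:) (intro order_power_mult_eq, auto simp: poly_prod)
  qed
  moreover have "order u q = 1" if "u \<in> T" for u
  proof -
    have "q = [:-u, 1:] ^ 1 * ((\<Prod>a\<in>S. [:-a, 1:] ^ 2) * (\<Prod>b\<in>T - {u}. [:-b, 1:]) * m)"
      unfolding q prod.remove[OF S(3) that, of "\<lambda>b. [:-b, 1:]"] by (simp only: power_one_right mult_ac)
    then show ?thesis
      using S m that by (simp only:) (intro order_power_mult_eq, auto simp: poly_prod)
  qed
  ultimately have "(\<lambda>u. (real (order u q) + 1) * \<tau> - 1) ` circle_poles q =
      {3 * \<tau> - 1} \<union> (\<lambda>_. 2 * \<tau> - 1) ` T"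
    using S(2,4) by (auto simp: image_Un image_constant_conv)
  then show ?thesis
    using beta_tilde_eq_Max_order[OF assms(1)] by (auto simp: image_constant_conv max_def)
qed

theorem mainTheorem5:
  fixes p q :: "complex poly" and \<tau> :: real
  assumes "classRO p q"
    and "classL1 p q \<or> classL2 p q \<or> classL3 p q"
  shows "(\<tau> = 0 \<longrightarrow> beta_tilde p q \<tau> = 0)
    \<and> (\<tau> < 0 \<longrightarrow>
        (crit_T p q = {} \<longrightarrow> beta_tilde p q \<tau> = 0) \<and>
        (crit_T p q \<noteq> {} \<longrightarrow>
           (-1 < \<tau> \<longrightarrow> beta_tilde p q \<tau> = 0) \<and>
           (\<tau> \<le> -1 \<longrightarrow> beta_tilde p q \<tau> = ereal (\<bar>\<tau>\<bar> - 1))))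
    \<and> (0 < \<tau> \<longrightarrow>
        (classL1 p q \<longrightarrow> beta_tilde p q \<tau> = 0) \<and>
        (classL2 p q \<longrightarrow>
           (1/2 < \<tau> \<longrightarrow> beta_tilde p q \<tau> = ereal (2 * \<tau> - 1)) \<and>
           (\<tau> \<le> 1/2 \<longrightarrow> beta_tilde p q \<tau> = 0)) \<and>
        (classL3 p q \<longrightarrow>
           (1/3 < \<tau> \<longrightarrow> beta_tilde p q \<tau> = ereal (3 * \<tau> - 1)) \<and>
           (\<tau> \<le> 1/3 \<longrightarrow> beta_tilde p q \<tau> = 0)))"
proof -
  have nonpos: "beta_tilde p q \<tau> = max 0 (if crit_T p q = {} then 0 else - \<tau> - 1)" if "\<tau> \<le> 0"
    using assms that beta_tilde_classL1 beta_tilde_classL2 beta_tilde_classL3 by (auto simp: max_def)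
  show ?thesis
    using nonpos beta_tilde_classL1[OF assms(1)] beta_tilde_classL2[OF assms(1)]
      beta_tilde_classL3[OF assms(1)]
    by (auto simp: max_def)
qed

end
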